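(* Let $s_0\in(0,1)$ and $\xi\in[1,\infty)$. Let $N=N_T$ be an increasing function of $T$ with $N_T/T=o(1)$, and for each $N$ let $0<s_0<s_{N1}<\dots<s_{NN}\le1$ be deterministic points; put $\mathcal S_N=\{s_{Ni}:1\le i\le N\}$. For each $T\ge1$ let $Y_n=m(n/T)+\epsilon_n$, $n=1,\dots,T$, where $m:[0,\infty)\to\mathbb{R}$ is Lipschitz continuous, $\|m\|_\infty<\infty$, and either $m>0$ everywhere or $m<0$ everywhere, and where $\{\epsilon_n\}$ are i.i.d. with $E(\epsilon_n)=0$ and finite fourth moment. Let $K:[0,\infty)\to[0,\infty)$ be Lipschitz continuous and bounded with $\mathrm{supp}(K)\subset[0,1]$ and $K>0$ on $(0,1)$. Let $h=h_T>0$ satisfy $|T/h-\xi|=O(1/T)$. Then $$E\sup_{s\in\mathcal S_N}\big|C_{T,s}(h)-E(C_{T,s}(h))\big|^2=o(1),\qquad T\to\infty.$$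
   Context: For $i\ge2$, $\widehat m_{h,-i}=N_{T,-i}^{-1}\,\frac1h\sum_{j=1}^{i-1}K((i-j)/h)\,Y_j$ with $N_{T,-i}=\frac1h\sum_{j=1}^{i-1}K((i-j)/h)$. For $s\in[s_0,1]$, $$C_{T,s}(h)=-\frac2T\sum_{i=2}^{\lfloor Ts\rfloor}Y_i\,\widehat m_{h,-i}+\frac1T\sum_{i=2}^{\lfloor Ts\rfloor}\widehat m_{h,-i}^2.$$ *)

theory Defs
  imports "HOL-Probability.Probability" "HOL-Library.Landau_Symbols"
begin

definition Yobs :: "(real \<Rightarrow> real) \<Rightarrow> (nat \<Rightarrow> 'a \<Rightarrow> real) \<Rightarrow> nat \<Rightarrow> nat \<Rightarrow> 'a \<Rightarrow> real" where
  "Yobs m eps T n \<omega> = m (real n / real T) + eps n \<omega>"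

definition Nloo :: "(real \<Rightarrow> real) \<Rightarrow> real \<Rightarrow> nat \<Rightarrow> real" where
  "Nloo K h i = (1 / h) * (\<Sum>j = 1..i - 1. K (real (i - j) / h))"

definition mhat :: "(real \<Rightarrow> real) \<Rightarrow> (real \<Rightarrow> real) \<Rightarrow> (nat \<Rightarrow> 'a \<Rightarrow> real) \<Rightarrow> nat \<Rightarrow> real \<Rightarrow> nat \<Rightarrow> 'a \<Rightarrow> real" where
  "mhat K m eps T h i \<omega> =
     (1 / Nloo K h i) * ((1 / h) * (\<Sum>j = 1..i - 1. K (real (i - j) / h) * Yobs m eps T j \<omega>))"

definition CTs :: "(real \<Rightarrow> real) \<Rightarrow> (real \<Rightarrow> real) \<Rightarrow> (nat \<Rightarrow> 'a \<Rightarrow> real) \<Rightarrow> nat \<Rightarrow> real \<Rightarrow> real \<Rightarrow> 'a \<Rightarrow> real" where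
  "CTs K m eps T h s \<omega> =
     - (2 / real T) * (\<Sum>i = 2..nat \<lfloor>real T * s\<rfloor>. Yobs m eps T i \<omega> * mhat K m eps T h i \<omega>)
     + (1 / real T) * (\<Sum>i = 2..nat \<lfloor>real T * s\<rfloor>. (mhat K m eps T h i \<omega>)\<^sup>2)"

end

theory Submission
  imports Defs
begin

text \<open>
  Write the leave-one-out estimate \<open>mhat\<^sub>i\<close> as a weighted average \<open>\<Sum>\<^sub>j w\<^sub>i\<^sub>j Y\<^sub>j\<close> with nonnegative weights of total mass at most one.
  Summed over any block \<open>A\<close> of indices, the contrast is a constant plus a linear and a quadratic form
  in the i.i.d. noise, whose variances are controlled through the fourth moment by the squared
  coefficients.  Because \<open>h \<asymp> T/\<xi>\<close>, for \<open>i > \<delta>T\<close> every weight is \<open>O(1/T)\<close>, so the coefficients are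
  \<open>O(1/T)\<close> and \<open>O(1/T\<^sup>2)\<close> and each late block \<open>{\<delta>T+1..\<lfloor>T s\<rfloor>}\<close> has variance \<open>O(1/T)\<close>; bounding the
  maximum over the \<open>N\<close> points by the sum costs \<open>O(N/T) = o(1)\<close>.  The common initial block
  \<open>{2..\<delta>T}\<close> has second moment \<open>O(\<delta>\<^sup>2)\<close> uniformly in \<open>T\<close>, and \<open>\<delta>\<close> is arbitrary.
\<close>

lemma weighted_sum_squared_le:
  fixes w y :: "'i \<Rightarrow> real"
  assumes "\<And>j. j \<in> J \<Longrightarrow> 0 \<le> w j" and "(\<Sum>j\<in>J. w j) \<le> 1"
  shows "(\<Sum>j\<in>J. w j * y j)\<^sup>2 \<le> (\<Sum>j\<in>J. w j * (y j)\<^sup>2)"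
proof -
  have "(\<Sum>j\<in>J. w j * y j)\<^sup>2 = (\<Sum>j\<in>J. sqrt (w j) * (sqrt (w j) * y j))\<^sup>2"
    using assms(1) by (intro arg_cong[where f = "\<lambda>x. x\<^sup>2"] sum.cong) (auto simp flip: mult.assoc)
  also have "\<dots> \<le> (\<Sum>j\<in>J. w j) * (\<Sum>j\<in>J. w j * (y j)\<^sup>2)"
    using Cauchy_Schwarz_ineq_sum[of "\<lambda>j. sqrt (w j)" "\<lambda>j. sqrt (w j) * y j" J] assms(1)
    by (simp add: power_mult_distrib)
  also have "\<dots> \<le> (\<Sum>j\<in>J. w j * (y j)\<^sup>2)"
    using assms by (intro mult_left_le_one_le sum_nonneg) auto
  finally show ?thesis .
qed

lemma square_add_le: "((a::real) + b)\<^sup>2 \<le> 2 * (a\<^sup>2 + b\<^sup>2)"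
  using sum_squares_bound[of a b] by (simp add: power2_sum)

lemma power4_add_le: "((a::real) + b)^4 \<le> 8 * (a^4 + b^4)"
proof -
  have "(a + b)^4 = ((a + b)\<^sup>2)\<^sup>2" by simp
  also have "\<dots> \<le> (2 * (a\<^sup>2 + b\<^sup>2))\<^sup>2"
    by (intro power_mono square_add_le) simp
  also have "\<dots> = 4 * (a\<^sup>2 + b\<^sup>2)\<^sup>2"
    by (simp add: power2_eq_square algebra_simps)
  also have "(a\<^sup>2 + b\<^sup>2)\<^sup>2 \<le> 2 * (a^4 + b^4)"
    using square_add_le[of "a\<^sup>2" "b\<^sup>2"] by (simp flip: power_mult)
  finally show ?thesis by simp
qed

lemma abs_prod4_le_sum_power4: "\<bar>(a::real) * b * c * d\<bar> \<le> a^4 + b^4 + c^4 + d^4"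
proof -
  have pow4: "x^4 = (x\<^sup>2)\<^sup>2" for x :: real by simp
  have "2 * (\<bar>a * b\<bar> * \<bar>c * d\<bar>) \<le> (a * b)\<^sup>2 + (c * d)\<^sup>2"
    using sum_squares_bound[of "\<bar>a * b\<bar>" "\<bar>c * d\<bar>"] by (simp only: power2_abs mult.assoc)
  moreover have "2 * (a * b)\<^sup>2 \<le> a^4 + b^4" "2 * (c * d)\<^sup>2 \<le> c^4 + d^4"
    using sum_squares_bound[of "a\<^sup>2" "b\<^sup>2"] sum_squares_bound[of "c\<^sup>2" "d\<^sup>2"]
    by (simp_all only: pow4 power_mult_distrib)
  moreover have "0 \<le> a^4 + b^4 + c^4 + d^4" by simp
  ultimately show ?thesis by (simp only: abs_mult mult.assoc)
qed

lemma double_sum_diagonal_pairs: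
  fixes a :: "nat \<Rightarrow> nat \<Rightarrow> 'b::comm_monoid_add"
  assumes "finite J"
  shows "(\<Sum>j\<in>J. \<Sum>k\<in>J. a j k) = (\<Sum>j\<in>J. a j j)
           + (\<Sum>p\<in>{p\<in>J\<times>J. fst p < snd p}. a (fst p) (snd p) + a (snd p) (fst p))"
proof -
  let ?P = "{p\<in>J\<times>J. fst p < snd p}"
  let ?Q = "{p\<in>J\<times>J. snd p < fst p}"
  let ?D = "{p\<in>J\<times>J. fst p = snd p}"
  have fin: "finite (J\<times>J)" using assms by simp
  have "(\<Sum>j\<in>J. \<Sum>k\<in>J. a j k) = (\<Sum>p\<in>?D \<union> (?P \<union> ?Q). a (fst p) (snd p))"
    by (simp add: sum.cartesian_product case_prod_beta) (intro sum.cong; auto)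
  also have "\<dots> = (\<Sum>p\<in>?D. a (fst p) (snd p)) + ((\<Sum>p\<in>?P. a (fst p) (snd p)) + (\<Sum>p\<in>?Q. a (fst p) (snd p)))"
    using fin by (subst sum.union_disjoint; (auto intro: finite_subset)?)+
  also have "(\<Sum>p\<in>?D. a (fst p) (snd p)) = (\<Sum>j\<in>J. a j j)"
    by (rule sum.reindex_bij_witness[where j = fst and i = "\<lambda>j. (j, j)"]) auto
  also have "(\<Sum>p\<in>?Q. a (fst p) (snd p)) = (\<Sum>p\<in>?P. a (snd p) (fst p))"
    by (rule sum.reindex_bij_witness[where i = prod.swap and j = prod.swap]) auto
  finally show ?thesis by (simp add: sum.distrib)
qed

lemma sum_delta_mult:
  fixes c e :: "'i \<Rightarrow> 'b::comm_ring"
  assumes "finite J" "i \<in> J"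
  shows "(\<Sum>j\<in>J. (if i = j then c j else 0) * e j) = c i * e i"
  using assms by (simp add: if_distrib[of "\<lambda>x. x * _"] cong: if_cong)

lemma sum_degree2_forms:
  fixes t :: real
  shows "(\<Sum>i\<in>A. c i + (\<Sum>j\<in>J. b i j * e j) + (\<Sum>j\<in>J. \<Sum>k\<in>J. q i j k * f j k)) / t
    = (\<Sum>i\<in>A. c i) / t + (\<Sum>j\<in>J. ((\<Sum>i\<in>A. b i j) / t) * e j)
      + (\<Sum>j\<in>J. \<Sum>k\<in>J. ((\<Sum>i\<in>A. q i j k) / t) * f j k)"
proof -
  have "(\<Sum>i\<in>A. \<Sum>j\<in>J. b i j * e j) = (\<Sum>j\<in>J. (\<Sum>i\<in>A. b i j) * e j)"
    by (simp add: sum.swap[of _ A] sum_distrib_right)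
  moreover have "(\<Sum>i\<in>A. \<Sum>j\<in>J. \<Sum>k\<in>J. q i j k * f j k) = (\<Sum>j\<in>J. \<Sum>k\<in>J. (\<Sum>i\<in>A. q i j k) * f j k)"
    by (simp add: sum.swap[of _ A] sum_distrib_right)
  ultimately show ?thesis
    by (simp add: sum.distrib add_divide_distrib times_divide_eq_left flip: sum_divide_distrib)
qed

section \<open>Second moments of linear and quadratic forms in i.i.d. noise\<close>

lemma integrable_dominated:
  fixes f g :: "'a \<Rightarrow> real"
  assumes "integrable M f" "g \<in> borel_measurable M" "\<And>x. \<bar>g x\<bar> \<le> f x"
  shows "integrable M g"
  using assms by (intro Bochner_Integration.integrable_bound[of M f g] AE_I2)
    (auto intro: order_trans[OF _ abs_ge_self])

lemma integrable_prod_of_power4: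
  fixes f g u v :: "'a \<Rightarrow> real"
  assumes [measurable]: "f \<in> borel_measurable M" "g \<in> borel_measurable M"
      "u \<in> borel_measurable M" "v \<in> borel_measurable M"
    and "integrable M (\<lambda>x. (f x)^4)" "integrable M (\<lambda>x. (g x)^4)"
      "integrable M (\<lambda>x. (u x)^4)" "integrable M (\<lambda>x. (v x)^4)"
  shows "integrable M (\<lambda>x. f x * g x * u x * v x)"
  by (rule integrable_dominated[of M "\<lambda>x. (f x)^4 + (g x)^4 + (u x)^4 + (v x)^4"])
    (use assms in \<open>auto intro: abs_prod4_le_sum_power4\<close>)

lemma integral_square_add_le:
  fixes X Y :: "'a \<Rightarrow> real"
  assumes [measurable]: "X \<in> borel_measurable M" "Y \<in> borel_measurable M"
    and iX: "integrable M (\<lambda>\<omega>. (X \<omega>)\<^sup>2)" and iY: "integrable M (\<lambda>\<omega>. (Y \<omega>)\<^sup>2)"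
  shows "integrable M (\<lambda>\<omega>. (X \<omega> + Y \<omega>)\<^sup>2)"
    and "(\<integral>\<omega>. (X \<omega> + Y \<omega>)\<^sup>2 \<partial>M) \<le> 2 * (\<integral>\<omega>. (X \<omega>)\<^sup>2 \<partial>M) + 2 * (\<integral>\<omega>. (Y \<omega>)\<^sup>2 \<partial>M)"
proof -
  have bound: "\<bar>(X \<omega> + Y \<omega>)\<^sup>2\<bar> \<le> 2 * (X \<omega>)\<^sup>2 + 2 * (Y \<omega>)\<^sup>2" for \<omega>
    using square_add_le[of "X \<omega>" "Y \<omega>"] by simp
  show int: "integrable M (\<lambda>\<omega>. (X \<omega> + Y \<omega>)\<^sup>2)"
  proof (rule integrable_dominated[OF _ _ bound])
    show "integrable M (\<lambda>\<omega>. 2 * (X \<omega>)\<^sup>2 + 2 * (Y \<omega>)\<^sup>2)" using iX iY by simp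
  qed measurable
  have "(\<integral>\<omega>. (X \<omega> + Y \<omega>)\<^sup>2 \<partial>M) \<le> (\<integral>\<omega>. 2 * (X \<omega>)\<^sup>2 + 2 * (Y \<omega>)\<^sup>2 \<partial>M)"
    using int iX iY bound by (intro integral_mono) auto
  then show "(\<integral>\<omega>. (X \<omega> + Y \<omega>)\<^sup>2 \<partial>M) \<le> 2 * (\<integral>\<omega>. (X \<omega>)\<^sup>2 \<partial>M) + 2 * (\<integral>\<omega>. (Y \<omega>)\<^sup>2 \<partial>M)"
    using iX iY by simp
qed

lemma integral_square_sum_orthogonal:
  fixes \<phi> :: "'i \<Rightarrow> 'a \<Rightarrow> real"
  assumes fin: "finite A"
    and int: "\<And>a b. a \<in> A \<Longrightarrow> b \<in> A \<Longrightarrow> integrable M (\<lambda>\<omega>. \<phi> a \<omega> * \<phi> b \<omega>)"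
    and orth: "\<And>a b. a \<in> A \<Longrightarrow> b \<in> A \<Longrightarrow> a \<noteq> b \<Longrightarrow> (\<integral>\<omega>. \<phi> a \<omega> * \<phi> b \<omega> \<partial>M) = 0"
  shows "(\<integral>\<omega>. (\<Sum>a\<in>A. c a * \<phi> a \<omega>)\<^sup>2 \<partial>M) = (\<Sum>a\<in>A. (c a)\<^sup>2 * (\<integral>\<omega>. \<phi> a \<omega> * \<phi> a \<omega> \<partial>M))"
    and "integrable M (\<lambda>\<omega>. (\<Sum>a\<in>A. c a * \<phi> a \<omega>)\<^sup>2)"
proof -
  have eq: "(\<lambda>\<omega>. (\<Sum>a\<in>A. c a * \<phi> a \<omega>)\<^sup>2) = (\<lambda>\<omega>. \<Sum>a\<in>A. \<Sum>b\<in>A. c a * c b * (\<phi> a \<omega> * \<phi> b \<omega>))"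
    by (auto simp: power2_eq_square sum_product algebra_simps)
  show "integrable M (\<lambda>\<omega>. (\<Sum>a\<in>A. c a * \<phi> a \<omega>)\<^sup>2)"
    unfolding eq using int by auto
  have "(\<integral>\<omega>. (\<Sum>a\<in>A. c a * \<phi> a \<omega>)\<^sup>2 \<partial>M) = (\<Sum>a\<in>A. \<Sum>b\<in>A. c a * c b * (\<integral>\<omega>. \<phi> a \<omega> * \<phi> b \<omega> \<partial>M))"
    unfolding eq using int by simp
  also have "\<dots> = (\<Sum>a\<in>A. \<Sum>b\<in>A. if b = a then c a * c a * (\<integral>\<omega>. \<phi> a \<omega> * \<phi> a \<omega> \<partial>M) else 0)"
    using orth by (intro sum.cong refl) auto
  finally show "(\<integral>\<omega>. (\<Sum>a\<in>A. c a * \<phi> a \<omega>)\<^sup>2 \<partial>M) = (\<Sum>a\<in>A. (c a)\<^sup>2 * (\<integral>\<omega>. \<phi> a \<omega> * \<phi> a \<omega> \<partial>M))"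
    using fin by (simp add: power2_eq_square)
qed

lemma integral_Max_square_add_le:
  fixes X :: "'a \<Rightarrow> real" and Y :: "'k \<Rightarrow> 'a \<Rightarrow> real"
  assumes Ks: "finite Ks" and iX: "integrable M (\<lambda>\<omega>. (X \<omega>)\<^sup>2)"
    and iY: "\<And>k. k \<in> Ks \<Longrightarrow> integrable M (\<lambda>\<omega>. (Y k \<omega>)\<^sup>2)"
  shows "(\<integral>\<omega>. Max (insert 0 ((\<lambda>k. (X \<omega> + Y k \<omega>)\<^sup>2) ` Ks)) \<partial>M)
      \<le> 2 * (\<integral>\<omega>. (X \<omega>)\<^sup>2 \<partial>M) + 2 * (\<Sum>k\<in>Ks. \<integral>\<omega>. (Y k \<omega>)\<^sup>2 \<partial>M)"
proof -
  have bound: "Max (insert 0 ((\<lambda>k. (X \<omega> + Y k \<omega>)\<^sup>2) ` Ks)) \<le> 2 * (X \<omega>)\<^sup>2 + 2 * (\<Sum>k\<in>Ks. (Y k \<omega>)\<^sup>2)" for \<omega>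
  proof (subst Max_le_iff; (intro ballI)?)
    fix x assume "x \<in> insert 0 ((\<lambda>k. (X \<omega> + Y k \<omega>)\<^sup>2) ` Ks)"
    then consider "x = 0" | k where "k \<in> Ks" "x = (X \<omega> + Y k \<omega>)\<^sup>2" by auto
    then show "x \<le> 2 * (X \<omega>)\<^sup>2 + 2 * (\<Sum>k\<in>Ks. (Y k \<omega>)\<^sup>2)"
    proof cases
      case 1
      then show ?thesis by (simp add: sum_nonneg)
    next
      case (2 k)
      have "(Y k \<omega>)\<^sup>2 \<le> (\<Sum>k\<in>Ks. (Y k \<omega>)\<^sup>2)"
        using 2 Ks by (intro member_le_sum) auto
      then show ?thesis
        using 2 square_add_le[of "X \<omega>" "Y k \<omega>"] by simp
    qed
  qed (use Ks in auto)
  have "(\<integral>\<omega>. Max (insert 0 ((\<lambda>k. (X \<omega> + Y k \<omega>)\<^sup>2) ` Ks)) \<partial>M)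
      \<le> (\<integral>\<omega>. 2 * (X \<omega>)\<^sup>2 + 2 * (\<Sum>k\<in>Ks. (Y k \<omega>)\<^sup>2) \<partial>M)"
    using iX iY bound by (intro integral_mono') (auto intro!: add_nonneg_nonneg sum_nonneg)
  also have "\<dots> = 2 * (\<integral>\<omega>. (X \<omega>)\<^sup>2 \<partial>M) + 2 * (\<Sum>k\<in>Ks. \<integral>\<omega>. (Y k \<omega>)\<^sup>2 \<partial>M)"
    using iX iY by (simp add: Bochner_Integration.integral_sum Bochner_Integration.integrable_sum)
  finally show ?thesis .
qed

lemma (in prob_space) variance_le_mean_sq_dev:
  fixes X :: "'a \<Rightarrow> real"
  assumes [measurable]: "X \<in> borel_measurable M"
    and int: "integrable M (\<lambda>\<omega>. (X \<omega> - a)\<^sup>2)"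
  shows "integrable M X" "integrable M (\<lambda>\<omega>. (X \<omega>)\<^sup>2)" "variance X \<le> expectation (\<lambda>\<omega>. (X \<omega> - a)\<^sup>2)"
proof -
  have "integrable M (\<lambda>\<omega>. X \<omega> - a)"
    by (rule square_integrable_imp_integrable) (use int in auto)
  then show iX: "integrable M X"
    using Bochner_Integration.integrable_add[of M "\<lambda>\<omega>. X \<omega> - a" "\<lambda>_. a"] by simp
  have sq: "(X \<omega>)\<^sup>2 = (X \<omega> - a)\<^sup>2 + 2 * a * X \<omega> - a\<^sup>2" for \<omega>
    by (simp add: power2_eq_square algebra_simps)
  show iX2: "integrable M (\<lambda>\<omega>. (X \<omega>)\<^sup>2)"
    unfolding sq using int iX by simp
  have "expectation (\<lambda>\<omega>. (X \<omega> - a)\<^sup>2) = variance X + (expectation X - a)\<^sup>2"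
    using iX iX2 by (simp add: power2_diff prob_space variance_eq algebra_simps power2_eq_square)
  then show "variance X \<le> expectation (\<lambda>\<omega>. (X \<omega> - a)\<^sup>2)" by simp
qed

locale centered_iid = prob_space M for M :: "'a measure" +
  fixes eps :: "nat \<Rightarrow> 'a \<Rightarrow> real"
  assumes eps_measurable[measurable]: "\<And>n. eps n \<in> borel_measurable M"
    and eps_indep: "indep_vars (\<lambda>_. borel) eps UNIV"
    and eps_distr: "\<And>n. distr M borel (eps n) = distr M borel (eps 0)"
    and integrable_eps0: "integrable M (eps 0)"
    and integral_eps0: "expectation (eps 0) = 0"
    and integrable_eps0_power4: "integrable M (\<lambda>\<omega>. (eps 0 \<omega>)^4)"
begin

definition "sigma2 = expectation (\<lambda>\<omega>. (eps 0 \<omega>)\<^sup>2)"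

definition "tau2 = expectation (\<lambda>\<omega>. ((eps 0 \<omega>)\<^sup>2 - sigma2)\<^sup>2)"

definition "mu4 = expectation (\<lambda>\<omega>. (eps 0 \<omega>)^4)"

lemma sigma2_nonneg: "0 \<le> sigma2"
  unfolding sigma2_def by simp

lemma tau2_nonneg: "0 \<le> tau2"
  unfolding tau2_def by simp

lemma mu4_nonneg: "0 \<le> mu4"
  unfolding mu4_def by simp

lemma integrable_comp_eps_iff:
  fixes f :: "real \<Rightarrow> real"
  assumes [measurable]: "f \<in> borel_measurable borel"
  shows "integrable M (\<lambda>\<omega>. f (eps n \<omega>)) \<longleftrightarrow> integrable M (\<lambda>\<omega>. f (eps 0 \<omega>))"
  using integrable_distr_eq[of "eps n" M borel f] integrable_distr_eq[of "eps 0" M borel f]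
  by (simp add: eps_distr[of n])

lemma integral_comp_eps:
  fixes f :: "real \<Rightarrow> real"
  assumes [measurable]: "f \<in> borel_measurable borel"
  shows "expectation (\<lambda>\<omega>. f (eps n \<omega>)) = expectation (\<lambda>\<omega>. f (eps 0 \<omega>))"
  using integral_distr[of "eps n" M borel f] integral_distr[of "eps 0" M borel f]
  by (simp add: eps_distr[of n])

lemma integrable_eps: "integrable M (eps n)"
  using integrable_comp_eps_iff[of "\<lambda>x. x" n] integrable_eps0 by simp

lemma integral_eps: "expectation (eps n) = 0"
  using integral_comp_eps[of "\<lambda>x. x" n] integral_eps0 by simp

lemma integrable_eps_power4: "integrable M (\<lambda>\<omega>. (eps n \<omega>)^4)"
  using integrable_comp_eps_iff[of "\<lambda>x. x^4" n] integrable_eps0_power4 by simp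

lemma integral_eps_power4: "expectation (\<lambda>\<omega>. (eps n \<omega>)^4) = mu4"
  unfolding mu4_def by (rule integral_comp_eps) simp

lemma integral_eps_square: "expectation (\<lambda>\<omega>. (eps n \<omega>)\<^sup>2) = sigma2"
  unfolding sigma2_def by (rule integral_comp_eps) simp

lemma integral_eps_square_centered_square: "expectation (\<lambda>\<omega>. ((eps n \<omega>)\<^sup>2 - sigma2)\<^sup>2) = tau2"
  unfolding tau2_def by (rule integral_comp_eps) simp

lemma integrable_eps_prod4: "integrable M (\<lambda>\<omega>. eps a \<omega> * eps b \<omega> * eps c \<omega> * eps d \<omega>)"
  by (intro integrable_prod_of_power4 integrable_eps_power4 eps_measurable)

lemma integrable_eps_prod3: "integrable M (\<lambda>\<omega>. eps a \<omega> * eps b \<omega> * eps c \<omega>)"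
  using integrable_prod_of_power4[of "eps a" M "eps b" "eps c" "\<lambda>_. 1"]
  by (simp add: integrable_eps_power4)

lemma integrable_eps_prod2: "integrable M (\<lambda>\<omega>. eps a \<omega> * eps b \<omega>)"
  using integrable_prod_of_power4[of "eps a" M "eps b" "\<lambda>_. 1" "\<lambda>_. 1"]
  by (simp add: integrable_eps_power4)

lemma integrable_eps_square: "integrable M (\<lambda>\<omega>. (eps a \<omega>)\<^sup>2)"
  using integrable_eps_prod2[of a a] by (simp add: power2_eq_square)

lemma integral_indep_factor:
  fixes f :: "real \<Rightarrow> real" and g :: "(nat \<Rightarrow> real) \<Rightarrow> real"
  assumes S: "finite S" "u \<notin> S"
    and [measurable]: "f \<in> borel_measurable borel" "g \<in> borel_measurable (PiM S (\<lambda>_. borel))"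
    and intf: "integrable M (\<lambda>\<omega>. f (eps u \<omega>))"
    and intg: "integrable M (\<lambda>\<omega>. g (restrict (\<lambda>i. eps i \<omega>) S))"
  shows "expectation (\<lambda>\<omega>. f (eps u \<omega>) * g (restrict (\<lambda>i. eps i \<omega>) S))
        = expectation (\<lambda>\<omega>. f (eps u \<omega>)) * expectation (\<lambda>\<omega>. g (restrict (\<lambda>i. eps i \<omega>) S))"
proof -
  have "(\<lambda>x. f (x u)) \<in> borel_measurable (PiM {u} (\<lambda>_. borel))"
    by measurable
  then have "indep_var borel ((\<lambda>x. f (x u)) \<circ> (\<lambda>\<omega>. restrict (\<lambda>i. eps i \<omega>) {u}))
     borel (g \<circ> (\<lambda>\<omega>. restrict (\<lambda>i. eps i \<omega>) S))"
    using S by (intro indep_var_compose[OF indep_var_restrict[OF eps_indep]]) auto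
  then have "indep_var borel (\<lambda>\<omega>. f (eps u \<omega>)) borel (\<lambda>\<omega>. g (restrict (\<lambda>i. eps i \<omega>) S))"
    by (simp add: comp_def restrict_def)
  then show ?thesis
    using indep_var_lebesgue_integral intf intg by blast
qed

lemma integral_eps_mult_eps: "j \<noteq> k \<Longrightarrow> expectation (\<lambda>\<omega>. eps j \<omega> * eps k \<omega>) = 0"
  using integral_indep_factor[of "{k}" j "\<lambda>x. x" "\<lambda>x. x k"] integrable_eps integral_eps by simp

lemma integral_centered_squares_orthogonal:
  assumes "j \<noteq> k"
  shows "expectation (\<lambda>\<omega>. ((eps j \<omega>)\<^sup>2 - sigma2) * ((eps k \<omega>)\<^sup>2 - sigma2)) = 0"
proof -
  have "expectation (\<lambda>\<omega>. (eps j \<omega>)\<^sup>2 - sigma2) = 0"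
    using integral_eps_square[of j] integrable_eps_square[of j] by (simp add: prob_space)
  then show ?thesis
    using integral_indep_factor[of "{k}" j "\<lambda>x. x\<^sup>2 - sigma2" "\<lambda>x. (x k)\<^sup>2 - sigma2"] assms
      integrable_eps_square by simp
qed

lemma integral_square_mult_square:
  "j \<noteq> k \<Longrightarrow> expectation (\<lambda>\<omega>. (eps j \<omega>)\<^sup>2 * (eps k \<omega>)\<^sup>2) = sigma2\<^sup>2"
  using integral_indep_factor[of "{k}" j "\<lambda>x. x\<^sup>2" "\<lambda>x. (x k)\<^sup>2"] integrable_eps_square
    integral_eps_square by (simp add: power2_eq_square)

lemma integral_eps_mult_prod3:
  assumes "u \<notin> {a, b, c}"
  shows "expectation (\<lambda>\<omega>. eps u \<omega> * (eps a \<omega> * eps b \<omega> * eps c \<omega>)) = 0"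
  using integral_indep_factor[of "{a,b,c}" u "\<lambda>x. x" "\<lambda>x. x a * x b * x c"] assms
    integrable_eps integral_eps integrable_eps_prod3[of a b c] by simp

text \<open>Some index occurs exactly once in \<open>\<epsilon>\<^sub>j \<epsilon>\<^sub>k \<epsilon>\<^sub>l \<epsilon>\<^sub>m\<close>.\<close>
lemma integral_pair_products_orthogonal:
  assumes "j < k" "l < m" "(j, k) \<noteq> (l, m)"
  shows "expectation (\<lambda>\<omega>. (eps j \<omega> * eps k \<omega>) * (eps l \<omega> * eps m \<omega>)) = 0"
proof -
  consider "j \<notin> {k, l, m}" | "j = l" "k \<notin> {j, l, m}" | "j = m" "l \<notin> {j, k, m}"
    using assms by force
  then show ?thesis
  proof cases
    case 1
    then show ?thesis using integral_eps_mult_prod3[of j k l m] by (simp add: mult_ac)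
  next
    case 2
    then show ?thesis using integral_eps_mult_prod3[of k j l m] by (simp add: mult_ac)
  next
    case 3
    then show ?thesis using integral_eps_mult_prod3[of l j k m] by (simp add: mult_ac)
  qed
qed

lemma integral_square_linear_form:
  assumes "finite J"
  shows "expectation (\<lambda>\<omega>. (\<Sum>j\<in>J. \<beta> j * eps j \<omega>)\<^sup>2) = sigma2 * (\<Sum>j\<in>J. (\<beta> j)\<^sup>2)"
    and "integrable M (\<lambda>\<omega>. (\<Sum>j\<in>J. \<beta> j * eps j \<omega>)\<^sup>2)"
  using integral_square_sum_orthogonal[of J M eps \<beta>, OF assms integrable_eps_prod2 integral_eps_mult_eps]
    integral_eps_square by (simp_all add: power2_eq_square sum_distrib_left mult_ac)

lemma integral_square_diagonal_form:
  fixes d :: "nat \<Rightarrow> real"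
  assumes "finite J"
  shows "expectation (\<lambda>\<omega>. (\<Sum>j\<in>J. d j * ((eps j \<omega>)\<^sup>2 - sigma2))\<^sup>2) = tau2 * (\<Sum>j\<in>J. (d j)\<^sup>2)"
    and "integrable M (\<lambda>\<omega>. (\<Sum>j\<in>J. d j * ((eps j \<omega>)\<^sup>2 - sigma2))\<^sup>2)"
proof -
  have int: "integrable M (\<lambda>\<omega>. ((eps a \<omega>)\<^sup>2 - sigma2) * ((eps b \<omega>)\<^sup>2 - sigma2))" for a b
  proof -
    have "((eps a \<omega>)\<^sup>2 - sigma2) * ((eps b \<omega>)\<^sup>2 - sigma2)
        = eps a \<omega> * eps a \<omega> * eps b \<omega> * eps b \<omega> - sigma2 * (eps a \<omega>)\<^sup>2 - sigma2 * (eps b \<omega>)\<^sup>2 + sigma2\<^sup>2" for \<omega>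
      by (simp add: power2_eq_square algebra_simps)
    then show ?thesis
      using integrable_eps_prod4[of a a b b] integrable_eps_square[of a] integrable_eps_square[of b] by simp
  qed
  show "integrable M (\<lambda>\<omega>. (\<Sum>j\<in>J. d j * ((eps j \<omega>)\<^sup>2 - sigma2))\<^sup>2)"
    by (rule integral_square_sum_orthogonal(2)[OF assms int integral_centered_squares_orthogonal])
  show "expectation (\<lambda>\<omega>. (\<Sum>j\<in>J. d j * ((eps j \<omega>)\<^sup>2 - sigma2))\<^sup>2) = tau2 * (\<Sum>j\<in>J. (d j)\<^sup>2)"
    using integral_square_sum_orthogonal(1)[OF assms int integral_centered_squares_orthogonal, where c = d]
      integral_eps_square_centered_square by (simp add: power2_eq_square sum_distrib_left mult_ac)
qed

lemma integral_square_pair_form: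
  fixes r :: "nat \<times> nat \<Rightarrow> real"
  assumes "finite P" "\<And>p. p \<in> P \<Longrightarrow> fst p < snd p"
  shows "expectation (\<lambda>\<omega>. (\<Sum>p\<in>P. r p * (eps (fst p) \<omega> * eps (snd p) \<omega>))\<^sup>2) = sigma2\<^sup>2 * (\<Sum>p\<in>P. (r p)\<^sup>2)"
    and "integrable M (\<lambda>\<omega>. (\<Sum>p\<in>P. r p * (eps (fst p) \<omega> * eps (snd p) \<omega>))\<^sup>2)"
proof -
  have int: "integrable M (\<lambda>\<omega>. (eps (fst a) \<omega> * eps (snd a) \<omega>) * (eps (fst b) \<omega> * eps (snd b) \<omega>))" for a b
    using integrable_eps_prod4 by (simp add: mult.assoc)
  have orth: "expectation (\<lambda>\<omega>. (eps (fst a) \<omega> * eps (snd a) \<omega>) * (eps (fst b) \<omega> * eps (snd b) \<omega>)) = 0"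
    if "a \<in> P" "b \<in> P" "a \<noteq> b" for a b
    using that assms(2) by (intro integral_pair_products_orthogonal) (auto simp: prod_eq_iff)
  have diag: "expectation (\<lambda>\<omega>. (eps (fst a) \<omega> * eps (snd a) \<omega>) * (eps (fst a) \<omega> * eps (snd a) \<omega>)) = sigma2\<^sup>2"
    if "a \<in> P" for a
    using integral_square_mult_square[of "fst a" "snd a"] assms(2)[OF that]
    by (simp add: power2_eq_square mult_ac)
  show "integrable M (\<lambda>\<omega>. (\<Sum>p\<in>P. r p * (eps (fst p) \<omega> * eps (snd p) \<omega>))\<^sup>2)"
    by (rule integral_square_sum_orthogonal(2)[OF assms(1) int orth])
  show "expectation (\<lambda>\<omega>. (\<Sum>p\<in>P. r p * (eps (fst p) \<omega> * eps (snd p) \<omega>))\<^sup>2) = sigma2\<^sup>2 * (\<Sum>p\<in>P. (r p)\<^sup>2)"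
    using integral_square_sum_orthogonal(1)[OF assms(1) int orth, where c = r] diag
    by (simp add: sum_distrib_left mult.commute)
qed

lemma integral_square_quadratic_form_le:
  fixes q :: "nat \<Rightarrow> nat \<Rightarrow> real"
  assumes J: "finite J"
  defines "Q \<equiv> \<lambda>\<omega>. (\<Sum>j\<in>J. \<Sum>k\<in>J. q j k * (eps j \<omega> * eps k \<omega>)) - sigma2 * (\<Sum>j\<in>J. q j j)"
  shows "expectation (\<lambda>\<omega>. (Q \<omega>)\<^sup>2) \<le> (2 * tau2 + 4 * sigma2\<^sup>2) * (\<Sum>j\<in>J. \<Sum>k\<in>J. (q j k)\<^sup>2)"
    and "integrable M (\<lambda>\<omega>. (Q \<omega>)\<^sup>2)"
proof -
  define P where "P = {p\<in>J\<times>J. fst p < snd p}"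
  have P: "finite P" "\<And>p. p \<in> P \<Longrightarrow> fst p < snd p" unfolding P_def using J by auto
  define r where "r p = q (fst p) (snd p) + q (snd p) (fst p)" for p
  define X where "X \<omega> = (\<Sum>j\<in>J. q j j * ((eps j \<omega>)\<^sup>2 - sigma2))" for \<omega>
  define Y where "Y \<omega> = (\<Sum>p\<in>P. r p * (eps (fst p) \<omega> * eps (snd p) \<omega>))" for \<omega>
  have Q_eq: "Q \<omega> = X \<omega> + Y \<omega>" for \<omega>
    unfolding Q_def X_def Y_def r_def P_def
    by (subst double_sum_diagonal_pairs[OF J])
      (simp add: algebra_simps sum.distrib sum_subtractf sum_distrib_left power2_eq_square)
  note iX = integral_square_diagonal_form[OF J, where d = "\<lambda>j. q j j", folded X_def]
  note iY = integral_square_pair_form[OF P, where r = r, folded Y_def]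
  have XY_meas: "X \<in> borel_measurable M" "Y \<in> borel_measurable M"
    unfolding X_def Y_def by measurable
  note XY = integral_square_add_le[OF XY_meas iX(2) iY(2)]
  have Q_fun: "(\<lambda>\<omega>. (Q \<omega>)\<^sup>2) = (\<lambda>\<omega>. (X \<omega> + Y \<omega>)\<^sup>2)"
    using Q_eq by simp
  show iQ: "integrable M (\<lambda>\<omega>. (Q \<omega>)\<^sup>2)"
    unfolding Q_fun by (rule XY(1))
  let ?S = "\<Sum>j\<in>J. \<Sum>k\<in>J. (q j k)\<^sup>2"
  have split_S: "?S = (\<Sum>j\<in>J. (q j j)\<^sup>2) + (\<Sum>p\<in>P. (q (fst p) (snd p))\<^sup>2 + (q (snd p) (fst p))\<^sup>2)"
    unfolding P_def by (rule double_sum_diagonal_pairs[OF J])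
  have "(\<Sum>p\<in>P. (r p)\<^sup>2) \<le> (\<Sum>p\<in>P. 2 * ((q (fst p) (snd p))\<^sup>2 + (q (snd p) (fst p))\<^sup>2))"
    unfolding r_def by (intro sum_mono square_add_le)
  also have "\<dots> \<le> 2 * ?S"
    using split_S by (simp add: sum_distrib_left sum_nonneg)
  finally have r_le: "(\<Sum>p\<in>P. (r p)\<^sup>2) \<le> 2 * ?S" .
  have d_le: "(\<Sum>j\<in>J. (q j j)\<^sup>2) \<le> ?S"
    using split_S by (simp add: sum_nonneg)
  have "expectation (\<lambda>\<omega>. (Q \<omega>)\<^sup>2) \<le> 2 * tau2 * (\<Sum>j\<in>J. (q j j)\<^sup>2) + 2 * sigma2\<^sup>2 * (\<Sum>p\<in>P. (r p)\<^sup>2)"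
    unfolding Q_fun using XY(2) iX(1) iY(1) by (simp add: mult.assoc)
  also have "\<dots> \<le> 2 * tau2 * ?S + 2 * sigma2\<^sup>2 * (2 * ?S)"
    using r_le d_le tau2_nonneg by (intro add_mono mult_left_mono) auto
  finally show "expectation (\<lambda>\<omega>. (Q \<omega>)\<^sup>2) \<le> (2 * tau2 + 4 * sigma2\<^sup>2) * ?S"
    by (simp add: algebra_simps)
qed


lemma variance_degree2_form_le:
  fixes \<beta> :: "nat \<Rightarrow> real" and q :: "nat \<Rightarrow> nat \<Rightarrow> real"
  assumes J: "finite J" and [measurable]: "X \<in> borel_measurable M"
    and X_eq: "\<And>\<omega>. X \<omega> = c + (\<Sum>j\<in>J. \<beta> j * eps j \<omega>) + (\<Sum>j\<in>J. \<Sum>k\<in>J. q j k * (eps j \<omega> * eps k \<omega>))"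
  shows "integrable M X" "integrable M (\<lambda>\<omega>. (X \<omega>)\<^sup>2)"
    and "variance X \<le> 2 * sigma2 * (\<Sum>j\<in>J. (\<beta> j)\<^sup>2) + 2 * (2 * tau2 + 4 * sigma2\<^sup>2) * (\<Sum>j\<in>J. \<Sum>k\<in>J. (q j k)\<^sup>2)"
proof -
  define L where "L \<omega> = (\<Sum>j\<in>J. \<beta> j * eps j \<omega>)" for \<omega>
  define Q where "Q \<omega> = (\<Sum>j\<in>J. \<Sum>k\<in>J. q j k * (eps j \<omega> * eps k \<omega>)) - sigma2 * (\<Sum>j\<in>J. q j j)" for \<omega>
  define a where "a = c + sigma2 * (\<Sum>j\<in>J. q j j)"
  have dev: "(\<lambda>\<omega>. (X \<omega> - a)\<^sup>2) = (\<lambda>\<omega>. (L \<omega> + Q \<omega>)\<^sup>2)"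
    unfolding X_eq a_def L_def Q_def by (simp add: algebra_simps)
  note iL = integral_square_linear_form[OF J, where \<beta> = \<beta>, folded L_def]
  note iQ = integral_square_quadratic_form_le[OF J, where q = q, folded Q_def]
  have LQ_meas: "L \<in> borel_measurable M" "Q \<in> borel_measurable M"
    unfolding L_def Q_def by measurable
  note LQ = integral_square_add_le[OF LQ_meas iL(2) iQ(2)]
  note var = variance_le_mean_sq_dev[OF \<open>X \<in> borel_measurable M\<close>, where a = a, unfolded dev, OF LQ(1)]
  show "integrable M X" "integrable M (\<lambda>\<omega>. (X \<omega>)\<^sup>2)"
    by (fact var(1), fact var(2))
  have "variance X \<le> 2 * expectation (\<lambda>\<omega>. (L \<omega>)\<^sup>2) + 2 * expectation (\<lambda>\<omega>. (Q \<omega>)\<^sup>2)"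
    using var(3) LQ(2) by linarith
  also have "\<dots> \<le> 2 * (sigma2 * (\<Sum>j\<in>J. (\<beta> j)\<^sup>2)) + 2 * ((2 * tau2 + 4 * sigma2\<^sup>2) * (\<Sum>j\<in>J. \<Sum>k\<in>J. (q j k)\<^sup>2))"
    using iL(1) iQ(1) by simp
  finally show "variance X \<le> 2 * sigma2 * (\<Sum>j\<in>J. (\<beta> j)\<^sup>2) + 2 * (2 * tau2 + 4 * sigma2\<^sup>2) * (\<Sum>j\<in>J. \<Sum>k\<in>J. (q j k)\<^sup>2)"
    by (simp only: mult.assoc)
qed

end

section \<open>Kernel weights\<close>

definition kernel_weight :: "(real \<Rightarrow> real) \<Rightarrow> real \<Rightarrow> nat \<Rightarrow> nat \<Rightarrow> real" where
  "kernel_weight K h i j = (if 1 \<le> j \<and> j < i then K (real (i - j) / h) / (h * Nloo K h i) else 0)"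

lemma kernel_weight_nonneg:
  assumes "0 < h" "\<And>x. 0 \<le> x \<Longrightarrow> 0 \<le> K x"
  shows "0 \<le> kernel_weight K h i j"
  using assms unfolding kernel_weight_def Nloo_def by (simp add: sum_nonneg)

lemma sum_kernel_weight_le_1:
  assumes "0 < h" "\<And>x. 0 \<le> x \<Longrightarrow> 0 \<le> K x"
  shows "(\<Sum>j\<in>{1..T}. kernel_weight K h i j) \<le> 1"
proof -
  define S where "S = (\<Sum>j = 1..i - 1. K (real (i - j) / h))"
  have "(\<Sum>j\<in>{1..T}. kernel_weight K h i j) = (\<Sum>j\<in>{1..T} \<inter> {1..i - 1}. kernel_weight K h i j)"
    by (intro sum.mono_neutral_right) (auto simp: kernel_weight_def)
  also have "\<dots> \<le> (\<Sum>j\<in>{1..i - 1}. kernel_weight K h i j)"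
    by (intro sum_mono2) (auto intro: kernel_weight_nonneg[OF assms])
  also have "\<dots> = (\<Sum>j\<in>{1..i - 1}. K (real (i - j) / h) / S)"
    using assms(1) by (intro sum.cong refl) (auto simp: kernel_weight_def Nloo_def S_def)
  also have "\<dots> = S / S"
    by (simp add: S_def flip: sum_divide_distrib)
  also have "\<dots> \<le> 1" by (cases "S = 0") auto
  finally show ?thesis .
qed

lemma mhat_eq_sum_kernel_weight:
  assumes "i \<le> T"
  shows "mhat K m eps T h i \<omega> = (\<Sum>j\<in>{1..T}. kernel_weight K h i j * Yobs m eps T j \<omega>)"
proof -
  have "(\<Sum>j\<in>{1..T}. kernel_weight K h i j * Yobs m eps T j \<omega>)
      = (\<Sum>j\<in>{1..i - 1}. kernel_weight K h i j * Yobs m eps T j \<omega>)"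
    using assms by (intro sum.mono_neutral_right) (auto simp: kernel_weight_def)
  also have "\<dots> = (\<Sum>j\<in>{1..i - 1}. K (real (i - j) / h) * Yobs m eps T j \<omega> / (h * Nloo K h i))"
    by (intro sum.cong refl) (auto simp: kernel_weight_def)
  also have "\<dots> = (\<Sum>j\<in>{1..i - 1}. K (real (i - j) / h) * Yobs m eps T j \<omega>) / (h * Nloo K h i)"
    by (rule sum_divide_distrib[symmetric])
  finally show ?thesis
    unfolding mhat_def by (simp add: divide_inverse mult_ac)
qed

text \<open>At least \<open>(b - a) h - 1\<close> of the lags \<open>k = i - j\<close> have \<open>k / h \<in> [a, b]\<close>.\<close>
lemma kernel_sum_lower_bound:
  assumes h: "0 < h" and K_nonneg: "\<And>x. 0 \<le> x \<Longrightarrow> 0 \<le> K x"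
    and K_ge: "\<And>x. a \<le> x \<Longrightarrow> x \<le> b \<Longrightarrow> \<kappa> \<le> K x" and "0 \<le> \<kappa>" "0 \<le> a"
    and wide: "2 \<le> (b - a) * h" and i: "b * h \<le> real (i - 1)"
  shows "\<kappa> * (b - a) * h / 2 \<le> (\<Sum>j = 1..i - 1. K (real (i - j) / h))"
proof -
  define L where "L = nat \<lfloor>a * h\<rfloor> + 1"
  define U where "U = nat \<lfloor>b * h\<rfloor>"
  have ah: "0 \<le> a * h" using assms by simp
  have L: "a * h < real L" "real L \<le> a * h + 1" "1 \<le> L"
    unfolding L_def using ah by linarith+
  have "0 \<le> b * h" using ah wide by (simp add: algebra_simps)
  then have "real U = real_of_int \<lfloor>b * h\<rfloor>" unfolding U_def by simp
  then have U: "real U \<le> b * h" "b * h - 1 < real U"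
    using floor_correct[of "b * h"] by linarith+
  have "(b - a) * h = b * h - a * h" by (simp add: algebra_simps)
  then have "(b - a) * h / 2 \<le> real U + 1 - real L"
    using L U wide by linarith
  also have "\<dots> = real (card {L..U})"
    using L U wide by (simp add: algebra_simps of_nat_diff)
  finally have card: "(b - a) * h / 2 \<le> real (card {L..U})" .
  have "\<kappa> * (b - a) * h / 2 \<le> (\<Sum>k\<in>{L..U}. \<kappa>)"
    using card \<open>0 \<le> \<kappa>\<close> by (simp add: mult_left_mono mult.commute mult.left_commute)
  also have "\<dots> \<le> (\<Sum>k\<in>{L..U}. K (real k / h))"
  proof (intro sum_mono K_ge)
    fix k assume "k \<in> {L..U}"
    then have "a * h \<le> real k" "real k \<le> b * h" using L U by auto
    then show "a \<le> real k / h" "real k / h \<le> b" using h by (simp_all add: field_simps)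
  qed
  also have "\<dots> \<le> (\<Sum>k = 1..i - 1. K (real k / h))"
    using L U i h by (intro sum_mono2) (auto intro: K_nonneg)
  also have "\<dots> = (\<Sum>j = 1..i - 1. K (real (i - j) / h))"
    by (rule sum.reindex_bij_witness[where i = "\<lambda>j. i - j" and j = "\<lambda>k. i - k"]) auto
  finally show ?thesis .
qed

lemma kernel_weight_le:
  assumes h: "0 < h" and K_nonneg: "\<And>x. 0 \<le> x \<Longrightarrow> 0 \<le> K x" and K_le: "\<And>x. 0 \<le> x \<Longrightarrow> K x \<le> KM"
    and K_ge: "\<And>x. a \<le> x \<Longrightarrow> x \<le> b \<Longrightarrow> \<kappa> \<le> K x" and "0 < \<kappa>" "0 \<le> a"
    and wide: "2 \<le> (b - a) * h" and i: "b * h \<le> real (i - 1)"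
  shows "kernel_weight K h i j \<le> 2 * KM / (\<kappa> * (b - a) * h)"
proof -
  have KM: "0 \<le> KM" using K_nonneg[of 0] K_le[of 0] by simp
  have "0 < (b - a) * h" using wide by linarith
  then have pos: "0 < \<kappa> * (b - a) * h / 2" using \<open>0 < \<kappa>\<close> by (simp add: mult.assoc)
  have S: "\<kappa> * (b - a) * h / 2 \<le> h * Nloo K h i"
    using kernel_sum_lower_bound[OF h K_nonneg K_ge _ _ wide i] assms h by (simp add: Nloo_def)
  have hN: "0 < h * Nloo K h i" using pos S by linarith
  have "kernel_weight K h i j \<le> KM / (h * Nloo K h i)"
    using K_le[of "real (i - j) / h"] h KM hN
    unfolding kernel_weight_def by (auto intro!: divide_right_mono)
  also have "\<dots> \<le> KM / (\<kappa> * (b - a) * h / 2)"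
    using KM pos S by (intro divide_left_mono) auto
  finally show ?thesis by (simp add: mult.commute)
qed

section \<open>The contrast over a block of time points\<close>

locale kernel_model = centered_iid M eps for M :: "'a measure" and eps +
  fixes m K :: "real \<Rightarrow> real" and B :: real
  assumes m_bound: "\<And>x. 0 \<le> x \<Longrightarrow> \<bar>m x\<bar> \<le> B"
    and K_nonneg: "\<And>x. 0 \<le> x \<Longrightarrow> 0 \<le> K x"
begin

text \<open>\<open>C\<^sub>T\<^sub>,\<^sub>s(h)\<close> summed over an arbitrary block \<open>A\<close> of indices instead of \<open>{2..\<lfloor>T s\<rfloor>}\<close>,
  so that the sum can be split into an initial block and a late block.\<close>
definition "contrast T h A \<omega> = - (2 / real T) * (\<Sum>i\<in>A. Yobs m eps T i \<omega> * mhat K m eps T h i \<omega>)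
     + (1 / real T) * (\<Sum>i\<in>A. (mhat K m eps T h i \<omega>)\<^sup>2)"

definition "trend T j = m (real j / real T)"
definition "smoothed_trend T h i = (\<Sum>j\<in>{1..T}. kernel_weight K h i j * trend T j)"
definition "smoothed_noise T h i \<omega> = (\<Sum>j\<in>{1..T}. kernel_weight K h i j * eps j \<omega>)"

definition "contrast_const T h A = (\<Sum>i\<in>A. (smoothed_trend T h i)\<^sup>2 - 2 * trend T i * smoothed_trend T h i) / real T"
definition "contrast_lin T h A j = (\<Sum>i\<in>A. (2 * smoothed_trend T h i - 2 * trend T i) * kernel_weight K h i j
     - (if i = j then 2 * smoothed_trend T h i else 0)) / real T"
definition "contrast_quad T h A j k =
  (\<Sum>i\<in>A. (kernel_weight K h i j - (if i = j then 2 else 0)) * kernel_weight K h i k) / real T"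

lemma CTs_eq_contrast: "CTs K m eps T h s \<omega> = contrast T h {2..nat \<lfloor>real T * s\<rfloor>} \<omega>"
  unfolding CTs_def contrast_def ..

lemma contrast_union:
  "finite A \<Longrightarrow> finite C \<Longrightarrow> A \<inter> C = {} \<Longrightarrow> contrast T h (A \<union> C) \<omega> = contrast T h A \<omega> + contrast T h C \<omega>"
  unfolding contrast_def by (simp add: sum.union_disjoint algebra_simps)

lemma contrast_measurable [measurable]: "contrast T h A \<in> borel_measurable M"
  unfolding contrast_def mhat_def Yobs_def by measurable

lemma contrast_eq_sum: "contrast T h A \<omega> =
    (\<Sum>i\<in>A. (mhat K m eps T h i \<omega>)\<^sup>2 - 2 * (Yobs m eps T i \<omega> * mhat K m eps T h i \<omega>)) / real T"
  unfolding contrast_def sum_subtractf sum_distrib_left[symmetric] by (simp add: diff_divide_distrib)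

lemma weight_nonneg: "0 < h \<Longrightarrow> 0 \<le> kernel_weight K h i j"
  using kernel_weight_nonneg[where K = K] K_nonneg by blast

lemma sum_weight_le_1: "0 < h \<Longrightarrow> (\<Sum>j\<in>{1..T}. kernel_weight K h i j) \<le> 1"
  using sum_kernel_weight_le_1[where K = K] K_nonneg by blast

lemma abs_trend_le: "\<bar>trend T j\<bar> \<le> B"
  unfolding trend_def by (rule m_bound) simp

lemma B_nonneg: "0 \<le> B"
  using abs_trend_le[of 0 0] by simp

lemma Yobs_eq: "Yobs m eps T j \<omega> = trend T j + eps j \<omega>"
  unfolding Yobs_def trend_def ..

lemma mhat_eq: "i \<le> T \<Longrightarrow> mhat K m eps T h i \<omega> = smoothed_trend T h i + smoothed_noise T h i \<omega>"
  by (simp add: mhat_eq_sum_kernel_weight Yobs_eq smoothed_trend_def smoothed_noise_def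
      sum.distrib distrib_left)

lemma abs_smoothed_trend_le:
  assumes "0 < h"
  shows "\<bar>smoothed_trend T h i\<bar> \<le> B"
proof -
  note w = weight_nonneg[OF assms]
  have "\<bar>smoothed_trend T h i\<bar> \<le> (\<Sum>j\<in>{1..T}. kernel_weight K h i j * \<bar>trend T j\<bar>)"
    unfolding smoothed_trend_def using w by (auto intro: order_trans[OF sum_abs] simp: abs_mult)
  also have "\<dots> \<le> (\<Sum>j\<in>{1..T}. kernel_weight K h i j) * B"
    unfolding sum_distrib_right using w abs_trend_le by (intro sum_mono mult_left_mono) auto
  also have "\<dots> \<le> B"
    using sum_weight_le_1[OF assms] B_nonneg w
    by (intro mult_left_le_one_le sum_nonneg) auto
  finally show ?thesis .
qed

lemma contrast_summand_eq:
  fixes h :: real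
  assumes "i \<in> {1..T}"
  defines "J \<equiv> {1..T}" and "w \<equiv> kernel_weight K h i" and "\<nu> \<equiv> smoothed_trend T h i" and "\<mu> \<equiv> trend T i"
  shows "(mhat K m eps T h i \<omega>)\<^sup>2 - 2 * (Yobs m eps T i \<omega> * mhat K m eps T h i \<omega>)
    = (\<nu>\<^sup>2 - 2 * \<mu> * \<nu>)
      + (\<Sum>j\<in>J. ((2 * \<nu> - 2 * \<mu>) * w j - (if i = j then 2 * \<nu> else 0)) * eps j \<omega>)
      + (\<Sum>j\<in>J. \<Sum>k\<in>J. ((w j - (if i = j then 2 else 0)) * w k) * (eps j \<omega> * eps k \<omega>))"
proof -
  define \<eta> where "\<eta> = smoothed_noise T h i \<omega>"
  have i: "i \<in> J" "i \<le> T" using assms(1) by (auto simp: J_def)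
  have J: "finite J" by (simp add: J_def)
  have \<eta>: "\<eta> = (\<Sum>j\<in>J. w j * eps j \<omega>)" unfolding \<eta>_def smoothed_noise_def J_def w_def ..
  have lin: "(\<Sum>j\<in>J. ((2 * \<nu> - 2 * \<mu>) * w j - (if i = j then 2 * \<nu> else 0)) * eps j \<omega>)
      = (2 * \<nu> - 2 * \<mu>) * \<eta> - 2 * \<nu> * eps i \<omega>"
    unfolding left_diff_distrib sum_subtractf sum_delta_mult[OF J i(1)]
    by (simp add: \<eta> sum_distrib_left mult.assoc)
  have quad: "(\<Sum>j\<in>J. \<Sum>k\<in>J. ((w j - (if i = j then 2 else 0)) * w k) * (eps j \<omega> * eps k \<omega>))
      = \<eta>\<^sup>2 - 2 * (eps i \<omega> * \<eta>)"
  proof -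
    have "(\<Sum>j\<in>J. \<Sum>k\<in>J. ((w j - (if i = j then 2 else 0)) * w k) * (eps j \<omega> * eps k \<omega>))
        = (\<Sum>j\<in>J. (w j - (if i = j then 2 else 0)) * eps j \<omega>) * (\<Sum>k\<in>J. w k * eps k \<omega>)"
      by (simp add: sum_distrib_left sum_distrib_right mult_ac)
    also have "\<dots> = (\<eta> - 2 * eps i \<omega>) * \<eta>"
      unfolding left_diff_distrib sum_subtractf sum_delta_mult[OF J i(1)] \<eta> ..
    finally show ?thesis
      by (simp add: power2_eq_square left_diff_distrib mult.assoc)
  qed
  show ?thesis
    unfolding lin quad using i(2)
    by (simp add: mhat_eq Yobs_eq \<eta>_def \<nu>_def \<mu>_def power2_eq_square algebra_simps)
qed

lemma contrast_decomp:
  assumes "A \<subseteq> {1..T}"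
  shows "contrast T h A \<omega> = contrast_const T h A + (\<Sum>j\<in>{1..T}. contrast_lin T h A j * eps j \<omega>)
           + (\<Sum>j\<in>{1..T}. \<Sum>k\<in>{1..T}. contrast_quad T h A j k * (eps j \<omega> * eps k \<omega>))"
  unfolding contrast_eq_sum contrast_const_def contrast_lin_def contrast_quad_def
  using assms by (subst sum.cong[OF refl contrast_summand_eq]) (auto simp: sum_degree2_forms)

lemma abs_contrast_lin_le:
  assumes h: "0 < h" and A: "A \<subseteq> {1..T}" and T: "0 < T" and "0 \<le> \<gamma>"
    and small: "\<And>i j. i \<in> A \<Longrightarrow> kernel_weight K h i j \<le> \<gamma> / real T"
  shows "\<bar>contrast_lin T h A j\<bar> \<le> (4 * B * \<gamma> + 2 * B) / real T"
proof -
  note w = weight_nonneg[OF h]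
  have finA: "finite A" using A finite_subset by blast
  have "\<bar>\<Sum>i\<in>A. (2 * smoothed_trend T h i - 2 * trend T i) * kernel_weight K h i j\<bar>
      \<le> (\<Sum>i\<in>A. 4 * B * (\<gamma> / real T))"
  proof (rule order_trans[OF sum_abs sum_mono])
    fix i assume i: "i \<in> A"
    have "\<bar>2 * smoothed_trend T h i - 2 * trend T i\<bar> \<le> 4 * B"
      using abs_smoothed_trend_le[OF h, of T i] abs_trend_le[of T i] by linarith
    then show "\<bar>(2 * smoothed_trend T h i - 2 * trend T i) * kernel_weight K h i j\<bar> \<le> 4 * B * (\<gamma> / real T)"
      unfolding abs_mult using w small[OF i] B_nonneg by (intro mult_mono) auto
  qed
  also have "\<dots> = real (card A) * (4 * B * (\<gamma> / real T))"
    by simp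
  also have "\<dots> \<le> real T * (4 * B * (\<gamma> / real T))"
    using card_mono[OF _ A] B_nonneg \<open>0 \<le> \<gamma>\<close> by (intro mult_right_mono) auto
  also have "\<dots> = 4 * B * \<gamma>"
    using T by simp
  finally have S: "\<bar>\<Sum>i\<in>A. (2 * smoothed_trend T h i - 2 * trend T i) * kernel_weight K h i j\<bar> \<le> 4 * B * \<gamma>" .
  have D: "\<bar>if j \<in> A then 2 * smoothed_trend T h j else 0\<bar> \<le> 2 * B"
    using abs_smoothed_trend_le[OF h, of T j] B_nonneg by auto
  have "\<bar>contrast_lin T h A j\<bar> = \<bar>(\<Sum>i\<in>A. (2 * smoothed_trend T h i - 2 * trend T i) * kernel_weight K h i j)
      - (if j \<in> A then 2 * smoothed_trend T h j else 0)\<bar> / real T"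
    unfolding contrast_lin_def sum_subtractf sum.delta[OF finA] by simp
  also have "\<dots> \<le> (4 * B * \<gamma> + 2 * B) / real T"
    using S D abs_triangle_ineq4 by (intro divide_right_mono) (blast intro: order_trans add_mono, simp)
  finally show ?thesis .
qed

lemma abs_contrast_quad_le:
  assumes h: "0 < h" and A: "A \<subseteq> {1..T}" and T: "0 < T" and "0 \<le> \<gamma>"
    and small: "\<And>i j. i \<in> A \<Longrightarrow> kernel_weight K h i j \<le> \<gamma> / real T"
  shows "\<bar>contrast_quad T h A j k\<bar> \<le> (\<gamma>\<^sup>2 + 2 * \<gamma>) / (real T)\<^sup>2"
proof -
  note w = weight_nonneg[OF h]
  have finA: "finite A" using A finite_subset by blast
  define x where "x = (\<Sum>i\<in>A. kernel_weight K h i j * kernel_weight K h i k)"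
  define y where "y = (if j \<in> A then 2 * kernel_weight K h j k else 0)"
  have "x \<le> (\<Sum>i\<in>A. (\<gamma> / real T) * (\<gamma> / real T))"
    unfolding x_def using w small \<open>0 \<le> \<gamma>\<close> by (intro sum_mono mult_mono) auto
  also have "\<dots> = real (card A) * ((\<gamma> / real T) * (\<gamma> / real T))"
    by simp
  also have "\<dots> \<le> real T * ((\<gamma> / real T) * (\<gamma> / real T))"
    using card_mono[OF _ A] by (intro mult_right_mono) auto
  also have "\<dots> = \<gamma>\<^sup>2 / real T"
    using T by (simp add: power2_eq_square)
  finally have x: "0 \<le> x" "x \<le> \<gamma>\<^sup>2 / real T"
    unfolding x_def using w by (auto intro: sum_nonneg)
  have y: "0 \<le> y" "y \<le> 2 * \<gamma> / real T"
    unfolding y_def using w small[of j k] \<open>0 \<le> \<gamma>\<close> T by auto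
  have "contrast_quad T h A j k = (x - y) / real T"
    unfolding contrast_quad_def x_def y_def left_diff_distrib sum_subtractf
    by (simp add: sum.delta[OF finA] if_distrib[of "\<lambda>x. x * _"] cong: if_cong)
  moreover have "\<bar>x - y\<bar> \<le> \<gamma>\<^sup>2 / real T + 2 * \<gamma> / real T"
    using x y by (simp add: abs_if)
  ultimately have "\<bar>contrast_quad T h A j k\<bar> \<le> (\<gamma>\<^sup>2 / real T + 2 * \<gamma> / real T) / real T"
    by (simp add: abs_divide divide_right_mono)
  then show ?thesis
    by (simp add: power2_eq_square add_divide_distrib)
qed

definition "variance_const \<gamma> =
  2 * sigma2 * (4 * B * \<gamma> + 2 * B)\<^sup>2 + 2 * (2 * tau2 + 4 * sigma2\<^sup>2) * (\<gamma>\<^sup>2 + 2 * \<gamma>)\<^sup>2"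

lemma sum_square_contrast_lin_le:
  assumes h: "0 < h" and A: "A \<subseteq> {1..T}" and T: "0 < T" and \<gamma>: "0 \<le> \<gamma>"
    and small: "\<And>i j. i \<in> A \<Longrightarrow> kernel_weight K h i j \<le> \<gamma> / real T"
  shows "(\<Sum>j\<in>{1..T}. (contrast_lin T h A j)\<^sup>2) \<le> (4 * B * \<gamma> + 2 * B)\<^sup>2 / real T"
proof -
  have "(\<Sum>j\<in>{1..T}. (contrast_lin T h A j)\<^sup>2) \<le> real T * ((4 * B * \<gamma> + 2 * B) / real T)\<^sup>2"
    using sum_bounded_above[of "{1..T}" "\<lambda>j. (contrast_lin T h A j)\<^sup>2"]
      abs_contrast_lin_le[OF h A T \<gamma> small] B_nonneg \<gamma>
    by (simp add: power2_le_iff_abs_le)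
  also have "\<dots> = (4 * B * \<gamma> + 2 * B)\<^sup>2 / real T"
    using T by (simp add: power2_eq_square)
  finally show ?thesis .
qed

lemma sum_square_contrast_quad_le:
  assumes h: "0 < h" and A: "A \<subseteq> {1..T}" and T: "0 < T" and \<gamma>: "0 \<le> \<gamma>"
    and small: "\<And>i j. i \<in> A \<Longrightarrow> kernel_weight K h i j \<le> \<gamma> / real T"
  shows "(\<Sum>j\<in>{1..T}. \<Sum>k\<in>{1..T}. (contrast_quad T h A j k)\<^sup>2) \<le> (\<gamma>\<^sup>2 + 2 * \<gamma>)\<^sup>2 / real T"
proof -
  have "(contrast_quad T h A j k)\<^sup>2 \<le> ((\<gamma>\<^sup>2 + 2 * \<gamma>) / (real T)\<^sup>2)\<^sup>2" for j k
    using abs_contrast_quad_le[OF h A T \<gamma> small, of j k] \<gamma> by (simp add: power2_le_iff_abs_le)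
  then have "(\<Sum>k\<in>{1..T}. (contrast_quad T h A j k)\<^sup>2) \<le> real T * ((\<gamma>\<^sup>2 + 2 * \<gamma>) / (real T)\<^sup>2)\<^sup>2" for j
    using sum_bounded_above[of "{1..T}" "\<lambda>k. (contrast_quad T h A j k)\<^sup>2"] by simp
  then have "(\<Sum>j\<in>{1..T}. \<Sum>k\<in>{1..T}. (contrast_quad T h A j k)\<^sup>2)
      \<le> (\<Sum>j\<in>{1..T}. real T * ((\<gamma>\<^sup>2 + 2 * \<gamma>) / (real T)\<^sup>2)\<^sup>2)"
    by (intro sum_mono)
  also have "\<dots> = (\<gamma>\<^sup>2 + 2 * \<gamma>)\<^sup>2 / (real T)\<^sup>2"
    using T by (simp add: power2_eq_square)
  also have "\<dots> \<le> (\<gamma>\<^sup>2 + 2 * \<gamma>)\<^sup>2 / real T"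
    using T by (intro divide_left_mono) (auto simp: power2_eq_square)
  finally show ?thesis .
qed

lemma variance_contrast_le:
  assumes h: "0 < h" and A: "A \<subseteq> {1..T}" and T: "0 < T" and \<gamma>: "0 \<le> \<gamma>"
    and small: "\<And>i j. i \<in> A \<Longrightarrow> kernel_weight K h i j \<le> \<gamma> / real T"
  shows "integrable M (contrast T h A)" "integrable M (\<lambda>\<omega>. (contrast T h A \<omega>)\<^sup>2)"
    and "variance (contrast T h A) \<le> variance_const \<gamma> / real T"
proof -
  note var = variance_degree2_form_le[OF finite_atLeastAtMost contrast_measurable contrast_decomp[OF A]]
  show "integrable M (contrast T h A)" "integrable M (\<lambda>\<omega>. (contrast T h A \<omega>)\<^sup>2)"
    by (fact var(1), fact var(2))
  have "variance (contrast T h A) \<le> 2 * sigma2 * ((4 * B * \<gamma> + 2 * B)\<^sup>2 / real T)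
      + 2 * (2 * tau2 + 4 * sigma2\<^sup>2) * ((\<gamma>\<^sup>2 + 2 * \<gamma>)\<^sup>2 / real T)"
    using sum_square_contrast_lin_le[OF h A T \<gamma> small] sum_square_contrast_quad_le[OF h A T \<gamma> small]
      sigma2_nonneg tau2_nonneg
    by (intro order_trans[OF var(3)] add_mono mult_left_mono) auto
  also have "\<dots> = variance_const \<gamma> / real T"
    unfolding variance_const_def by (simp add: add_divide_distrib algebra_simps)
  finally show "variance (contrast T h A) \<le> variance_const \<gamma> / real T" .
qed

definition "moment_const = 80 * (B^4 + mu4)"

lemma moment_const_nonneg: "0 \<le> moment_const"
  unfolding moment_const_def using mu4_nonneg by simp

lemma Yobs_power4_le: "(Yobs m eps T j \<omega>)^4 \<le> 8 * (B^4 + (eps j \<omega>)^4)"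
proof -
  have "(trend T j)^4 \<le> B^4"
    using abs_trend_le[of T j] power_mono[of "\<bar>trend T j\<bar>" B 4] by (simp add: power_abs)
  then show ?thesis
    unfolding Yobs_eq using power4_add_le[of "trend T j" "eps j \<omega>"] by simp
qed

lemma Yobs_measurable: "Yobs m eps T j \<in> borel_measurable M"
  unfolding Yobs_def by measurable

lemma Yobs_power4_integrable: "integrable M (\<lambda>\<omega>. (Yobs m eps T j \<omega>)^4)"
proof (rule integrable_dominated)
  show "integrable M (\<lambda>\<omega>. 8 * (B^4 + (eps j \<omega>)^4))"
    using integrable_eps_power4 by simp
  show "(\<lambda>\<omega>. (Yobs m eps T j \<omega>)^4) \<in> borel_measurable M"
    using Yobs_measurable by (rule borel_measurable_power)
  show "\<bar>(Yobs m eps T j \<omega>)^4\<bar> \<le> 8 * (B^4 + (eps j \<omega>)^4)" for \<omega>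
    using Yobs_power4_le by simp
qed

lemma integral_Yobs_power4_le: "expectation (\<lambda>\<omega>. (Yobs m eps T j \<omega>)^4) \<le> 8 * (B^4 + mu4)"
proof -
  have "expectation (\<lambda>\<omega>. (Yobs m eps T j \<omega>)^4) \<le> expectation (\<lambda>\<omega>. 8 * (B^4 + (eps j \<omega>)^4))"
    using Yobs_power4_integrable integrable_eps_power4 Yobs_power4_le by (intro integral_mono) auto
  then show ?thesis
    using integrable_eps_power4 integral_eps_power4 by (simp add: prob_space)
qed

lemma contrast_summand_square_le:
  assumes "0 < h" "i \<le> T"
  shows "((mhat K m eps T h i \<omega>)\<^sup>2 - 2 * (Yobs m eps T i \<omega> * mhat K m eps T h i \<omega>))\<^sup>2
    \<le> 2 * (Yobs m eps T i \<omega>)^4 + 8 * (\<Sum>j\<in>{1..T}. kernel_weight K h i j * (Yobs m eps T j \<omega>)^4)"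
proof -
  let ?Y = "Yobs m eps T" and ?w = "kernel_weight K h i" and ?m = "mhat K m eps T h i \<omega>"
  define S where "S = (\<Sum>j\<in>{1..T}. ?w j * (?Y j \<omega>)\<^sup>2)"
  note w = weight_nonneg[OF assms(1)] sum_weight_le_1[OF assms(1)]
  have m: "?m\<^sup>2 \<le> S"
    unfolding S_def mhat_eq_sum_kernel_weight[OF assms(2)] using w by (intro weighted_sum_squared_le)
  have "\<bar>2 * (?Y i \<omega> * ?m)\<bar> \<le> (?Y i \<omega>)\<^sup>2 + ?m\<^sup>2"
    using sum_squares_bound[of "\<bar>?Y i \<omega>\<bar>" "\<bar>?m\<bar>"] by (simp add: abs_mult)
  moreover have "\<bar>?m\<^sup>2 - 2 * (?Y i \<omega> * ?m)\<bar> \<le> ?m\<^sup>2 + \<bar>2 * (?Y i \<omega> * ?m)\<bar>"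
    using abs_triangle_ineq4[of "?m\<^sup>2" "2 * (?Y i \<omega> * ?m)"] by simp
  ultimately have "\<bar>?m\<^sup>2 - 2 * (?Y i \<omega> * ?m)\<bar> \<le> (?Y i \<omega>)\<^sup>2 + 2 * S"
    using m by linarith
  then have "(?m\<^sup>2 - 2 * (?Y i \<omega> * ?m))\<^sup>2 \<le> ((?Y i \<omega>)\<^sup>2 + 2 * S)\<^sup>2"
    by (simp add: power2_le_iff_abs_le S_def sum_nonneg w)
  also have "\<dots> \<le> 2 * (?Y i \<omega>)^4 + 8 * S\<^sup>2"
    using square_add_le[of "(?Y i \<omega>)\<^sup>2" "2 * S"] by (simp add: power_mult_distrib flip: power_mult)
  also have "S\<^sup>2 \<le> (\<Sum>j\<in>{1..T}. ?w j * (?Y j \<omega>)^4)"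
    unfolding S_def using weighted_sum_squared_le[of "{1..T}" ?w "\<lambda>j. (?Y j \<omega>)\<^sup>2"] w
    by (simp flip: power_mult)
  finally show ?thesis by simp
qed

lemma integral_summand_dominant_le:
  assumes h: "0 < h"
  shows "integrable M (\<lambda>\<omega>. 2 * (Yobs m eps T i \<omega>)^4 + 8 * (\<Sum>j\<in>{1..T}. kernel_weight K h i j * (Yobs m eps T j \<omega>)^4))"
    and "expectation (\<lambda>\<omega>. 2 * (Yobs m eps T i \<omega>)^4 + 8 * (\<Sum>j\<in>{1..T}. kernel_weight K h i j * (Yobs m eps T j \<omega>)^4))
      \<le> moment_const"
proof -
  let ?Y = "Yobs m eps T" and ?w = "kernel_weight K h i"
  define c where "c = 8 * (B^4 + mu4)"
  have c: "0 \<le> c" unfolding c_def using mu4_nonneg by simp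
  show "integrable M (\<lambda>\<omega>. 2 * (?Y i \<omega>)^4 + 8 * (\<Sum>j\<in>{1..T}. ?w j * (?Y j \<omega>)^4))"
    using Yobs_power4_integrable by auto
  have "expectation (\<lambda>\<omega>. 2 * (?Y i \<omega>)^4 + 8 * (\<Sum>j\<in>{1..T}. ?w j * (?Y j \<omega>)^4))
      = 2 * expectation (\<lambda>\<omega>. (?Y i \<omega>)^4) + 8 * (\<Sum>j\<in>{1..T}. ?w j * expectation (\<lambda>\<omega>. (?Y j \<omega>)^4))"
    using Yobs_power4_integrable by simp
  also have "\<dots> \<le> 2 * c + 8 * (\<Sum>j\<in>{1..T}. ?w j * c)"
    unfolding c_def using integral_Yobs_power4_le weight_nonneg[OF h]
    by (intro add_mono mult_left_mono sum_mono) auto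
  also have "\<dots> \<le> 2 * c + 8 * c"
    unfolding sum_distrib_right[symmetric]
    using sum_weight_le_1[OF h, where T = T and i = i] weight_nonneg[OF h] c
    by (intro add_left_mono mult_left_mono mult_left_le_one_le sum_nonneg) auto
  finally show "expectation (\<lambda>\<omega>. 2 * (?Y i \<omega>)^4 + 8 * (\<Sum>j\<in>{1..T}. ?w j * (?Y j \<omega>)^4)) \<le> moment_const"
    unfolding moment_const_def c_def by simp
qed

lemma second_moment_contrast_le:
  assumes h: "0 < h" and A: "A \<subseteq> {1..T}"
  shows "integrable M (\<lambda>\<omega>. (contrast T h A \<omega>)\<^sup>2)"
    and "expectation (\<lambda>\<omega>. (contrast T h A \<omega>)\<^sup>2) \<le> (real (card A) / real T)\<^sup>2 * moment_const"
proof -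
  let ?Y = "Yobs m eps T" and ?w = "kernel_weight K h"
  define R where "R i \<omega> = 2 * (?Y i \<omega>)^4 + 8 * (\<Sum>j\<in>{1..T}. ?w i j * (?Y j \<omega>)^4)" for i \<omega>
  define U where "U \<omega> = real (card A) / (real T)\<^sup>2 * (\<Sum>i\<in>A. R i \<omega>)" for \<omega>
  have R_int: "integrable M (R i)" and R_le: "expectation (R i) \<le> moment_const" for i
    unfolding R_def using integral_summand_dominant_le[OF h] by (simp_all add: R_def)
  have bound: "\<bar>(contrast T h A \<omega>)\<^sup>2\<bar> \<le> U \<omega>" for \<omega>
  proof -
    let ?Z = "\<lambda>i. (mhat K m eps T h i \<omega>)\<^sup>2 - 2 * (?Y i \<omega> * mhat K m eps T h i \<omega>)"
    have "(contrast T h A \<omega>)\<^sup>2 = (\<Sum>i\<in>A. ?Z i)\<^sup>2 / (real T)\<^sup>2"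
      unfolding contrast_eq_sum by (simp add: power_divide)
    also have "\<dots> \<le> (\<Sum>i\<in>A. (?Z i)\<^sup>2) * real (card A) / (real T)\<^sup>2"
      by (intro divide_right_mono sum_squared_le_sum_of_squares) simp
    also have "\<dots> \<le> (\<Sum>i\<in>A. R i \<omega>) * real (card A) / (real T)\<^sup>2"
      unfolding R_def using A h contrast_summand_square_le
      by (intro divide_right_mono mult_right_mono sum_mono) auto
    finally show ?thesis by (simp add: U_def mult.commute)
  qed
  have U_int: "integrable M U"
    unfolding U_def using R_int by simp
  show int: "integrable M (\<lambda>\<omega>. (contrast T h A \<omega>)\<^sup>2)"
    by (rule integrable_dominated[OF U_int borel_measurable_power[OF contrast_measurable] bound])
  have "expectation (\<lambda>\<omega>. (contrast T h A \<omega>)\<^sup>2) \<le> expectation U"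
    using int U_int bound by (intro integral_mono) auto
  also have "\<dots> = real (card A) / (real T)\<^sup>2 * (\<Sum>i\<in>A. expectation (R i))"
    unfolding U_def using R_int by simp
  also have "\<dots> \<le> real (card A) / (real T)\<^sup>2 * (\<Sum>i\<in>A. moment_const)"
    using R_le by (intro mult_left_mono sum_mono) auto
  also have "\<dots> = (real (card A) / real T)\<^sup>2 * moment_const"
    by (simp add: power2_eq_square)
  finally show "expectation (\<lambda>\<omega>. (contrast T h A \<omega>)\<^sup>2) \<le> (real (card A) / real T)\<^sup>2 * moment_const" .
qed

lemma variance_initial_contrast_le:
  assumes h: "0 < h" and "I0 \<le> T"
  shows "integrable M (contrast T h {2..I0})" "integrable M (\<lambda>\<omega>. (contrast T h {2..I0} \<omega>)\<^sup>2)"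
    and "variance (contrast T h {2..I0}) \<le> (real I0 / real T)\<^sup>2 * moment_const"
proof -
  have A: "{2..I0} \<subseteq> {1..T}" using \<open>I0 \<le> T\<close> by auto
  note mom = second_moment_contrast_le[OF h A]
  note var = variance_le_mean_sq_dev[OF contrast_measurable, where a = 0, simplified, OF mom(1)]
  show "integrable M (contrast T h {2..I0})" "integrable M (\<lambda>\<omega>. (contrast T h {2..I0} \<omega>)\<^sup>2)"
    by (fact var(1), fact var(2))
  have "real (card {2..I0}) / real T \<le> real I0 / real T"
    by (intro divide_right_mono) auto
  then have "(real (card {2..I0}) / real T)\<^sup>2 \<le> (real I0 / real T)\<^sup>2"
    by (intro power_mono) auto
  then show "variance (contrast T h {2..I0}) \<le> (real I0 / real T)\<^sup>2 * moment_const"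
    using var(3) mom(2) moment_const_nonneg by (meson mult_right_mono order_trans)
qed

text \<open>The first \<open>I\<^sub>0\<close> summands, where the kernel weights need not be small, are controlled by the
  crude second moment bound; the remaining blocks by their variance.\<close>
lemma expectation_Max_centered_contrast_le:
  fixes n :: "nat \<Rightarrow> nat"
  assumes h: "0 < h" and T: "0 < T" and I0: "1 \<le> I0" "I0 \<le> T"
    and n: "\<And>k. k \<in> Ks \<Longrightarrow> I0 \<le> n k \<and> n k \<le> T" and Ks: "finite Ks" and \<gamma>: "0 \<le> \<gamma>"
    and small: "\<And>i j. I0 < i \<Longrightarrow> kernel_weight K h i j \<le> \<gamma> / real T"
  shows "expectation (\<lambda>\<omega>. Max (insert 0 ((\<lambda>k. \<bar>contrast T h {2..n k} \<omega>
            - expectation (contrast T h {2..n k})\<bar>\<^sup>2) ` Ks)))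
      \<le> 2 * (real I0 / real T)\<^sup>2 * moment_const + 2 * real (card Ks) * (variance_const \<gamma> / real T)"
proof -
  let ?G1 = "contrast T h {2..I0}" and ?G2 = "\<lambda>k. contrast T h {I0 + 1..n k}"
  define W where "W \<omega> = ?G1 \<omega> - expectation ?G1" for \<omega>
  define V where "V k \<omega> = ?G2 k \<omega> - expectation (?G2 k)" for k \<omega>
  note G1_var = variance_initial_contrast_le[OF h I0(2)]
  have A2: "{I0 + 1..n k} \<subseteq> {1..T}" if "k \<in> Ks" for k
    using n[OF that] by auto
  have G2_var: "integrable M (?G2 k)" "integrable M (\<lambda>\<omega>. (?G2 k \<omega>)\<^sup>2)"
    "variance (?G2 k) \<le> variance_const \<gamma> / real T" if "k \<in> Ks" for k
    using variance_contrast_le[OF h A2[OF that] T \<gamma>] small by auto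
  have centered: "\<bar>contrast T h {2..n k} \<omega> - expectation (contrast T h {2..n k})\<bar>\<^sup>2 = (W \<omega> + V k \<omega>)\<^sup>2"
    if "k \<in> Ks" for k \<omega>
  proof -
    have "{2..n k} = {2..I0} \<union> {I0 + 1..n k}" using n[OF that] I0 by auto
    then have "contrast T h {2..n k} = (\<lambda>\<omega>. ?G1 \<omega> + ?G2 k \<omega>)" by (auto simp: contrast_union)
    then show ?thesis
      using G1_var(1) G2_var(1)[OF that] unfolding W_def V_def by (simp add: algebra_simps)
  qed
  have V_le: "(\<Sum>k\<in>Ks. expectation (\<lambda>\<omega>. (V k \<omega>)\<^sup>2)) \<le> real (card Ks) * (variance_const \<gamma> / real T)"
    using G2_var(3) unfolding V_def by (intro sum_bounded_above) auto
  have iW: "integrable M (\<lambda>\<omega>. (W \<omega>)\<^sup>2)" and iV: "\<And>k. k \<in> Ks \<Longrightarrow> integrable M (\<lambda>\<omega>. (V k \<omega>)\<^sup>2)"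
    unfolding W_def V_def power2_diff using G1_var(1,2) G2_var(1,2) by auto
  have "expectation (\<lambda>\<omega>. Max (insert 0 ((\<lambda>k. \<bar>contrast T h {2..n k} \<omega>
            - expectation (contrast T h {2..n k})\<bar>\<^sup>2) ` Ks)))
      = expectation (\<lambda>\<omega>. Max (insert 0 ((\<lambda>k. (W \<omega> + V k \<omega>)\<^sup>2) ` Ks)))"
    using centered by (intro Bochner_Integration.integral_cong refl arg_cong[where f = "\<lambda>S. Max (insert 0 S)"]
        image_cong) auto
  also have "\<dots> \<le> 2 * expectation (\<lambda>\<omega>. (W \<omega>)\<^sup>2) + 2 * (\<Sum>k\<in>Ks. expectation (\<lambda>\<omega>. (V k \<omega>)\<^sup>2))"
    by (rule integral_Max_square_add_le[OF Ks iW iV])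
  also have "\<dots> \<le> 2 * ((real I0 / real T)\<^sup>2 * moment_const) + 2 * (real (card Ks) * (variance_const \<gamma> / real T))"
    using G1_var(3) V_le unfolding W_def by (intro add_mono mult_left_mono) auto
  finally show ?thesis by (simp add: mult.assoc)
qed

end

section \<open>Asymptotics\<close>

lemma tendsto_zero_by_approximation:
  fixes F g :: "nat \<Rightarrow> real"
  assumes F: "\<And>T. 0 \<le> F T" and g: "g \<longlonglongrightarrow> 0"
    and approx: "\<And>e. 0 < e \<Longrightarrow> \<exists>C. eventually (\<lambda>T. F T \<le> e + C * g T) sequentially"
  shows "F \<longlonglongrightarrow> 0"
proof (rule order_tendstoI)
  fix e :: real assume "0 < e"
  then obtain C where C: "eventually (\<lambda>T. F T \<le> e / 2 + C * g T) sequentially"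
    using approx[of "e / 2"] by auto
  have "(\<lambda>T. C * g T) \<longlonglongrightarrow> 0"
    using tendsto_mult_right_zero[OF g] by simp
  then have "eventually (\<lambda>T. C * g T < e / 2) sequentially"
    using \<open>0 < e\<close> by (intro order_tendstoD) auto
  with C show "eventually (\<lambda>T. F T < e) sequentially"
    by eventually_elim simp
next
  fix a :: real assume "a < 0"
  then show "eventually (\<lambda>T. a < F T) sequentially"
    using F by (auto intro: always_eventually order_less_le_trans)
qed

lemma sample_points_bounds:
  fixes s :: "nat \<Rightarrow> nat \<Rightarrow> real"
  assumes s_first: "\<And>n. 1 \<le> n \<Longrightarrow> s0 < s n 1"
    and s_incr: "\<And>n i. 1 \<le> i \<Longrightarrow> i < n \<Longrightarrow> s n i < s n (Suc i)"
    and s_last: "\<And>n. 1 \<le> n \<Longrightarrow> s n n \<le> 1"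
    and k: "1 \<le> k" "k \<le> n"
  shows "s0 < s n k" "s n k \<le> 1"
proof -
  have mono: "s n i \<le> s n (i + d)" if "1 \<le> i" "i + d \<le> n" for i d
    using that
  proof (induction d)
    case (Suc d)
    then have "s n i \<le> s n (i + d)" by simp
    also have "\<dots> < s n (Suc (i + d))" using Suc.prems by (intro s_incr) auto
    finally show ?case by simp
  qed simp
  show "s0 < s n k" using s_first[of n] mono[of 1 "k - 1"] k by simp
  show "s n k \<le> 1" using s_last[of n] mono[of k "n - k"] k by simp
qed

lemma bandwidth_eventually_comparable:
  fixes h :: "nat \<Rightarrow> real"
  assumes xi: "1 \<le> \<xi>" and h_pos: "\<And>T. 1 \<le> T \<Longrightarrow> 0 < h T"
    and h_rate: "(\<lambda>T. real T / h T - \<xi>) \<in> O(\<lambda>T. 1 / real T)"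
  shows "eventually (\<lambda>T. 0 < h T \<and> real T \<le> 2 * \<xi> * h T \<and> h T \<le> 2 * real T) sequentially"
proof -
  have "(\<lambda>T. 1 / real T) \<in> o(\<lambda>_. 1 :: real)"
    by (rule smalloI_tendsto) (simp_all add: lim_1_over_n)
  from smalloD_tendsto[OF landau_o.big_small_trans[OF h_rate this]]
  have "(\<lambda>T. real T / h T - \<xi>) \<longlonglongrightarrow> 0" by simp
  then have "(\<lambda>T. real T / h T) \<longlonglongrightarrow> \<xi>"
    by (simp only: LIM_zero_iff)
  moreover have "\<xi> / 2 < \<xi>" "\<xi> < 2 * \<xi>" using xi by simp_all
  ultimately have "eventually (\<lambda>T. \<xi> / 2 < real T / h T \<and> real T / h T < 2 * \<xi> \<and> 1 \<le> T) sequentially"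
    by (intro eventually_conj order_tendstoD eventually_ge_at_top)
  then show ?thesis
  proof (rule eventually_mono)
    fix T assume T: "\<xi> / 2 < real T / h T \<and> real T / h T < 2 * \<xi> \<and> 1 \<le> T"
    then have h: "0 < h T" using h_pos by blast
    have "h T \<le> \<xi> * h T" using xi h by simp
    moreover have "\<xi> * h T < 2 * real T" "real T < 2 * \<xi> * h T"
      using T h by (simp_all add: field_simps)
    ultimately show "0 < h T \<and> real T \<le> 2 * \<xi> * h T \<and> h T \<le> 2 * real T"
      using h by linarith
  qed
qed

lemma continuous_pos_bounded_below:
  fixes K :: "real \<Rightarrow> real"
  assumes "continuous_on {a..b} K" "\<And>x. a \<le> x \<Longrightarrow> x \<le> b \<Longrightarrow> 0 < K x" "a \<le> b"
  obtains \<kappa> where "0 < \<kappa>" "\<And>x. a \<le> x \<Longrightarrow> x \<le> b \<Longrightarrow> \<kappa> \<le> K x"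
proof -
  obtain x0 where "x0 \<in> {a..b}" "\<And>y. y \<in> {a..b} \<Longrightarrow> K x0 \<le> K y"
    using continuous_attains_inf[of "{a..b}" K] assms by auto
  with assms(2) show ?thesis by (intro that[of "K x0"]) auto
qed

text \<open>Beyond \<open>\<delta>T\<close> the leave-one-out window contains a fixed fraction of \<open>h \<asymp> T\<close> lags at which
  \<open>K\<close> is bounded below, so every weight is \<open>O(1/T)\<close>.\<close>
lemma kernel_weight_le_beyond:
  assumes K_nonneg: "\<And>x. 0 \<le> x \<Longrightarrow> 0 \<le> K x" and K_le: "\<And>x. 0 \<le> x \<Longrightarrow> K x \<le> KM"
    and \<kappa>: "0 < \<kappa>" "\<And>x. \<delta> / 8 \<le> x \<Longrightarrow> x \<le> \<delta> / 4 \<Longrightarrow> \<kappa> \<le> K x"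
    and \<delta>: "0 < \<delta>" and xi: "1 \<le> \<xi>"
    and h: "0 < h" "real T \<le> 2 * \<xi> * h" "h \<le> 2 * real T"
    and T: "32 * \<xi> \<le> \<delta> * real T" and i: "\<delta> * real T < real i"
  shows "kernel_weight K h i j \<le> 32 * \<xi> * KM / (\<kappa> * \<delta>) / real T"
proof -
  have KM: "0 \<le> KM" using K_nonneg[of 0] K_le[of 0] by simp
  have "32 * \<xi> \<le> \<delta> * (2 * \<xi> * h)"
    using T h(2) \<delta> by (meson mult_left_mono order_trans less_imp_le)
  then have wide: "2 \<le> (\<delta> / 4 - \<delta> / 8) * h"
    using xi by (simp add: algebra_simps)
  have "\<delta> / 4 * h \<le> \<delta> / 4 * (2 * real T)"
    using h(3) \<delta> by (intro mult_left_mono) auto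
  moreover have "2 \<le> \<delta> * real T" using T xi by linarith
  ultimately have "\<delta> / 4 * h \<le> real (i - 1)"
    using i by (simp add: of_nat_diff)
  then have "kernel_weight K h i j \<le> 2 * KM / (\<kappa> * (\<delta> / 4 - \<delta> / 8) * h)"
    using kernel_weight_le[OF h(1) K_nonneg K_le \<kappa>(2) \<kappa>(1) _ wide] \<delta> by simp
  also have "\<dots> = 16 * KM / (\<kappa> * \<delta>) * (1 / h)" by (simp add: field_simps)
  also have "\<dots> \<le> 16 * KM / (\<kappa> * \<delta>) * (2 * \<xi> / real T)"
    using h \<kappa>(1) \<delta> KM by (intro mult_left_mono) (auto simp: field_simps)
  also have "\<dots> = 32 * \<xi> * KM / (\<kappa> * \<delta>) / real T" by (simp add: field_simps)
  finally show ?thesis .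
qed

lemma kernel_weight_eventually_small:
  fixes h :: "nat \<Rightarrow> real"
  assumes K_cont: "continuous_on {0..} K" and K_nonneg: "\<And>x. 0 \<le> x \<Longrightarrow> 0 \<le> K x"
    and K_le: "\<And>x. 0 \<le> x \<Longrightarrow> K x \<le> KM" and K_pos: "\<And>x. 0 < x \<Longrightarrow> x < 1 \<Longrightarrow> 0 < K x"
    and \<delta>: "0 < \<delta>" "\<delta> < 1" and xi: "1 \<le> \<xi>"
    and h: "eventually (\<lambda>T. 0 < h T \<and> real T \<le> 2 * \<xi> * h T \<and> h T \<le> 2 * real T) sequentially"
  obtains \<gamma> where "0 \<le> \<gamma>"
    "eventually (\<lambda>T. \<forall>i j. \<delta> * real T < real i \<longrightarrow> kernel_weight K (h T) i j \<le> \<gamma> / real T) sequentially"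
proof -
  have "continuous_on {\<delta> / 8..\<delta> / 4} K"
    using K_cont by (rule continuous_on_subset) (use \<delta> in auto)
  then obtain \<kappa> where \<kappa>: "0 < \<kappa>" "\<And>x. \<delta> / 8 \<le> x \<Longrightarrow> x \<le> \<delta> / 4 \<Longrightarrow> \<kappa> \<le> K x"
    by (rule continuous_pos_bounded_below) (use K_pos \<delta> in auto)
  have "0 \<le> 32 * \<xi> * KM / (\<kappa> * \<delta>)"
    using xi K_nonneg[of 0] K_le[of 0] \<kappa> \<delta> by simp
  moreover have "eventually (\<lambda>T. 32 * \<xi> / \<delta> \<le> real T) sequentially"
    by (rule eventually_sequentiallyI[of "nat \<lceil>32 * \<xi> / \<delta>\<rceil>"]) linarith
  with h have "eventually (\<lambda>T. \<forall>i j. \<delta> * real T < real i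
      \<longrightarrow> kernel_weight K (h T) i j \<le> 32 * \<xi> * KM / (\<kappa> * \<delta>) / real T) sequentially"
  proof eventually_elim
    case (elim T)
    then have T: "32 * \<xi> \<le> \<delta> * real T" using \<delta> by (simp add: field_simps)
    show ?case
    proof (intro allI impI)
      fix i j assume "\<delta> * real T < real i"
      with elim(1) T show "kernel_weight K (h T) i j \<le> 32 * \<xi> * KM / (\<kappa> * \<delta>) / real T"
        by (intro kernel_weight_le_beyond[OF K_nonneg K_le \<kappa> \<delta>(1) xi]) auto
    qed
  qed
  ultimately show ?thesis using that by blast
qed

context kernel_model
begin

lemma eventually_expectation_Max_centered_CTs_le:
  fixes h :: "nat \<Rightarrow> real" and N :: "nat \<Rightarrow> nat" and s :: "nat \<Rightarrow> nat \<Rightarrow> real"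
  assumes s_range: "\<forall>n k. 1 \<le> k \<and> k \<le> n \<longrightarrow> s0 < s n k \<and> s n k \<le> 1"
    and \<delta>: "0 < \<delta>" "\<delta> \<le> s0" "\<delta> < 1" and \<gamma>: "0 \<le> \<gamma>"
    and h: "eventually (\<lambda>T. 0 < h T) sequentially"
    and small: "eventually (\<lambda>T. \<forall>i j. \<delta> * real T < real i \<longrightarrow> kernel_weight K (h T) i j \<le> \<gamma> / real T) sequentially"
  shows "eventually (\<lambda>T. expectation (\<lambda>\<omega>. Max (insert 0 ((\<lambda>i. \<bar>CTs K m eps T (h T) (s (N T) i) \<omega>
              - expectation (CTs K m eps T (h T) (s (N T) i))\<bar>\<^sup>2) ` {1..N T})))
      \<le> 2 * \<delta>\<^sup>2 * moment_const + 2 * variance_const \<gamma> * (real (N T) / real T)) sequentially"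
proof -
  have "eventually (\<lambda>T. 1 / \<delta> \<le> real T) sequentially"
    by (rule eventually_sequentiallyI[of "nat \<lceil>1 / \<delta>\<rceil>"]) linarith
  with h small show ?thesis
  proof eventually_elim
    case (elim T)
    define I0 where "I0 = nat \<lfloor>\<delta> * real T\<rfloor>"
    define n where "n k = nat \<lfloor>real T * s (N T) k\<rfloor>" for k
    have \<delta>T: "1 \<le> \<delta> * real T" "\<delta> * real T \<le> real T"
      using elim(3) \<delta> by (simp add: field_simps, intro mult_left_le_one_le, auto)
    then have T: "0 < T" by simp
    have I0_real: "real I0 = of_int \<lfloor>\<delta> * real T\<rfloor>" unfolding I0_def using \<delta>T by simp
    then have I0: "1 \<le> I0" "I0 \<le> T" "real I0 \<le> \<delta> * real T"
      using \<delta>T floor_correct[of "\<delta> * real T"] by linarith+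
    have n: "I0 \<le> n k \<and> n k \<le> T" if "k \<in> {1..N T}" for k
    proof -
      have "s0 < s (N T) k" "s (N T) k \<le> 1" using s_range that by simp_all
      then have "\<delta> \<le> s (N T) k" "s (N T) k \<le> 1" using \<delta> by simp_all
      then have "\<delta> * real T \<le> s (N T) k * real T" "real T * s (N T) k \<le> real T"
        by (auto intro: mult_right_mono mult_left_le)
      then show ?thesis
        unfolding I0_def n_def by (metis floor_mono floor_of_nat nat_int nat_mono mult.commute)
    qed
    have small': "kernel_weight K (h T) i j \<le> \<gamma> / real T" if "I0 < i" for i j
    proof -
      have "real I0 + 1 \<le> real i" using that by simp
      then have "\<delta> * real T < real i" using I0_real floor_correct[of "\<delta> * real T"] by linarith
      then show ?thesis using elim(2) by blast
    qed
    have "(real I0 / real T)\<^sup>2 \<le> \<delta>\<^sup>2"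
      using I0(3) T by (intro power_mono) (auto simp: field_simps)
    then have "(real I0 / real T)\<^sup>2 * moment_const \<le> \<delta>\<^sup>2 * moment_const"
      using moment_const_nonneg by (rule mult_right_mono)
    moreover note expectation_Max_centered_contrast_le[where Ks = "{1..N T}" and n = n,
        OF elim(1) T I0(1,2) n _ \<gamma> small']
    ultimately show ?case
      unfolding CTs_eq_contrast n_def by (simp add: mult_ac)
  qed
qed

lemma expectation_Max_centered_CTs_approx:
  fixes h :: "nat \<Rightarrow> real" and N :: "nat \<Rightarrow> nat" and s :: "nat \<Rightarrow> nat \<Rightarrow> real"
  assumes s_range: "\<forall>n k. 1 \<le> k \<and> k \<le> n \<longrightarrow> s0 < s n k \<and> s n k \<le> 1" and "0 < s0"
    and K_cont: "continuous_on {0..} K" and K_le: "\<And>x. 0 \<le> x \<Longrightarrow> K x \<le> KM"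
    and K_pos: "\<And>x. 0 < x \<Longrightarrow> x < 1 \<Longrightarrow> 0 < K x" and xi: "1 \<le> \<xi>"
    and h: "eventually (\<lambda>T. 0 < h T \<and> real T \<le> 2 * \<xi> * h T \<and> h T \<le> 2 * real T) sequentially"
    and "0 < e"
  shows "\<exists>C. eventually (\<lambda>T. expectation (\<lambda>\<omega>. Max (insert 0 ((\<lambda>i. \<bar>CTs K m eps T (h T) (s (N T) i) \<omega>
              - expectation (CTs K m eps T (h T) (s (N T) i))\<bar>\<^sup>2) ` {1..N T})))
      \<le> e + C * (real (N T) / real T)) sequentially"
proof -
  define \<delta> where "\<delta> = min (min s0 (1 / 2)) (e / (2 * moment_const + 1))"
  have \<delta>: "0 < \<delta>" "\<delta> \<le> s0" "\<delta> < 1"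
    unfolding \<delta>_def using \<open>0 < s0\<close> \<open>0 < e\<close> moment_const_nonneg by auto
  have "2 * \<delta>\<^sup>2 * moment_const \<le> 2 * \<delta> * moment_const"
    using \<delta> moment_const_nonneg by (intro mult_right_mono) (auto simp: power2_eq_square)
  also have "\<dots> \<le> 2 * (e / (2 * moment_const + 1)) * moment_const"
    unfolding \<delta>_def using moment_const_nonneg by (intro mult_right_mono) auto
  also have "\<dots> \<le> e"
    using \<open>0 < e\<close> moment_const_nonneg by (simp add: field_simps)
  finally have \<delta>_e: "2 * \<delta>\<^sup>2 * moment_const \<le> e" .
  obtain \<gamma> where \<gamma>: "0 \<le> \<gamma>"
    and small: "eventually (\<lambda>T. \<forall>i j. \<delta> * real T < real i \<longrightarrow> kernel_weight K (h T) i j \<le> \<gamma> / real T) sequentially"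
    by (rule kernel_weight_eventually_small[OF K_cont K_nonneg K_le K_pos \<delta>(1,3) xi h])
  have "eventually (\<lambda>T. 0 < h T) sequentially"
    using h by (rule eventually_mono) simp
  from eventually_expectation_Max_centered_CTs_le[where N = N, OF s_range \<delta> \<gamma> this small]
  show ?thesis
    by (intro exI[of _ "2 * variance_const \<gamma>"], elim eventually_mono) (use \<delta>_e in simp)
qed

end

theorem theorem3:
  fixes M :: "'a measure"
    and eps :: "nat \<Rightarrow> 'a \<Rightarrow> real"
    and m K :: "real \<Rightarrow> real"
    and h :: "nat \<Rightarrow> real"
    and N :: "nat \<Rightarrow> nat"
    and s :: "nat \<Rightarrow> nat \<Rightarrow> real"
    and s0 \<xi> :: real
  assumes s0: "0 < s0" "s0 < 1"
    and xi: "1 \<le> \<xi>"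
    and N_mono: "mono N"
    and N_small: "(\<lambda>T. real (N T) / real T) \<in> o(\<lambda>_. 1)"
    and s_first: "\<And>n. 1 \<le> n \<Longrightarrow> s0 < s n 1"
    and s_incr: "\<And>n i. 1 \<le> i \<Longrightarrow> i < n \<Longrightarrow> s n i < s n (Suc i)"
    and s_last: "\<And>n. 1 \<le> n \<Longrightarrow> s n n \<le> 1"
    and m_lip: "\<exists>L. L-lipschitz_on {0..} m"
    and m_bdd: "bounded (m ` {0..})"
    and m_sign: "(\<forall>x\<ge>0. m x > 0) \<or> (\<forall>x\<ge>0. m x < 0)"
    and M: "prob_space M"
    and eps_meas: "\<And>n. eps n \<in> borel_measurable M"
    and eps_indep: "prob_space.indep_vars M (\<lambda>_. borel) eps UNIV"
    and eps_id: "\<And>n. distr M borel (eps n) = distr M borel (eps 0)"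
    and eps_int: "integrable M (eps 0)"
    and eps_mean: "(\<integral>\<omega>. eps 0 \<omega> \<partial>M) = 0"
    and eps_4th: "integrable M (\<lambda>\<omega>. (eps 0 \<omega>) ^ 4)"
    and K_lip: "\<exists>L. L-lipschitz_on {0..} K"
    and K_nonneg: "\<And>x. 0 \<le> x \<Longrightarrow> 0 \<le> K x"
    and K_bdd: "bounded (K ` {0..})"
    and K_supp: "\<And>x. 1 < x \<Longrightarrow> K x = 0"
    and K_pos: "\<And>x. 0 < x \<Longrightarrow> x < 1 \<Longrightarrow> 0 < K x"
    and h_pos: "\<And>T. 1 \<le> T \<Longrightarrow> 0 < h T"
    and h_rate: "(\<lambda>T. real T / h T - \<xi>) \<in> O(\<lambda>T. 1 / real T)"
  shows "(\<lambda>T. \<integral>\<omega>. Max (insert 0 ((\<lambda>i. \<bar>CTs K m eps T (h T) (s (N T) i) \<omega>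
              - (\<integral>\<omega>'. CTs K m eps T (h T) (s (N T) i) \<omega>' \<partial>M)\<bar>\<^sup>2) ` {1..N T})) \<partial>M)
         \<longlonglongrightarrow> 0"
proof -
  obtain B where "\<And>x. 0 \<le> x \<Longrightarrow> \<bar>m x\<bar> \<le> B"
    using m_bdd unfolding bounded_iff by auto
  then interpret kernel_model M eps m K B
    using M eps_meas eps_indep eps_id eps_int eps_mean eps_4th K_nonneg
    by (intro kernel_model.intro centered_iid.intro centered_iid_axioms.intro kernel_model_axioms.intro) auto
  obtain KM where KM: "\<And>x. 0 \<le> x \<Longrightarrow> K x \<le> KM"
    using K_bdd unfolding bounded_iff by (metis abs_le_D1 atLeast_iff image_eqI real_norm_def)
  have K_cont: "continuous_on {0..} K"
    using K_lip lipschitz_on_continuous_on by blast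
  show ?thesis
  proof (rule tendsto_zero_by_approximation)
    show "(\<lambda>T. real (N T) / real T) \<longlonglongrightarrow> 0"
      using smalloD_tendsto[OF N_small] by simp
    show "\<exists>C. eventually (\<lambda>T. expectation (\<lambda>\<omega>. Max (insert 0 ((\<lambda>i. \<bar>CTs K m eps T (h T) (s (N T) i) \<omega>
              - expectation (CTs K m eps T (h T) (s (N T) i))\<bar>\<^sup>2) ` {1..N T})))
      \<le> e + C * (real (N T) / real T)) sequentially" if "0 < e" for e
      using sample_points_bounds[OF s_first s_incr s_last]
      by (intro expectation_Max_centered_CTs_approx[OF _ s0(1) K_cont KM K_pos xi
            bandwidth_eventually_comparable[OF xi h_pos h_rate] that]) auto
  qed (intro integral_nonneg_AE AE_I2 Max_ge; simp)
qed

end
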